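(* Let $\mathcal Q$ be a unary query on $p$-labelled graphs that is computable by a rational piecewise linear GNN. Then $\mathcal Q$ is definable in $\mathsf{GFO{+}C}$.
   Context: Graphs are finite, simple, undirected, with nonempty vertex set. A $p$-labelled graph is $(G,\mathbf b)$ with $\mathbf b:V(G)\to\{0,1\}^p$. A unary query $\mathcal Q$ assigns to each $(G,\mathbf b)$ a map $\mathcal Q(G,\mathbf b):V(G)\to\{0,1\}$, invariant under label-preserving isomorphisms. A dyadic rational is a rational whose denominator is a power of $2$. A piecewise linear function $L:\mathbb R\to\mathbb R$ (finitely many pieces) is rational if all thresholds, slopes and constant terms of its minimal representation are dyadic rationals. An FNN $\mathfrak F=(V,E,(\mathfrak a_v),(w_e),(b_v))$ has a finite dag skeleton, activations $\mathfrak a_v$, weights $w_e$, biases $b_v$; sources are inputs, sinks outputs; a non-input node computes $\mathfrak a_v(b_v+\sum_{uv\in E}w_{uv}\cdot\text{value}(u))$. It is rational piecewise linear if all weights and biases are dyadic rationals and all activations are continuous rational piecewise linear functions. A GNN layer $(\mathrm{msg},\mathrm{agg},\mathrm{comb})$, with $\mathrm{msg},\mathrm{comb}$ computed by FNNs and $\mathrm{agg}\in\{$sum, mean, max$\}$ (coordinatewise, $\mathbf 0$ on empty multisets), maps $\mathcal x:V(G)\to\mathbb R^p$ to $\mathcal y(v)=\mathrm{comb}(\mathcal x(v),\mathrm{agg}\{\!\{\mathrm{msg}(\mathcal x(v),\mathcal x(w)):w\in N(v)\}\!\})$. A GNN is a finite composition of layers; $\tilde{\mathfrak N}(G,\mathcal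 x)$ is its output signal. It is rational piecewise linear if all its FNNs are. A GNN $\mathfrak N$ (input dimension $p$, output dimension $1$) computes $\mathcal Q$ if for all $(G,\mathbf b)$ and $v$: $\tilde{\mathfrak N}(G,\mathbf b)(v)\ge3/4$ if $\mathcal Q(G,\mathbf b)(v)=1$ and $\le1/4$ if $\mathcal Q(G,\mathbf b)(v)=0$. Logic: $(G,\mathbf b)$ is the structure with universe $V(G)$, binary $E$, unary $P_i=\{v:\mathbf b(v)_i=1\}$. Two sorts: vertex variables (over $V(G)$) and number variables (over $\mathbb N$). $\mathsf{GFO{+}C}$ uses only vertex variables $x_1,x_2$. Terms: number variables, $0$, $1$, $\mathrm{ord}$ (value $|V(G)|$), $\theta+\theta'$, $\theta\cdot\theta'$, counting terms. Formulas: $\theta\le\theta'$, $E(x_i,x_j)$, $P_k(x_i)$, $x_i=x_j$, $\neg\varphi$, $\varphi\wedge\psi$. Counting terms: $\#(x_{3-i},y_1<\theta_1,\dots,y_k<\theta_k).(\gamma\wedge\varphi)$ with guard $\gamma$ equal to $E(x_i,x_{3-i})$ or $E(x_{3-i},x_i)$, and $\#(y_1<\theta_1,\dots,y_k<\theta_k).\varphi$. A counting term $\#(z_1..z_m,y_1<\theta_1,..,y_k<\theta_k).\psi$ evaluates to the number of tuples $(c_1..c_m,b_1..b_k)$ of vertices and naturals with each $b_j$ below the value of $\theta_j$ under the assignment extended by $z\mapsto c$, $y_1..y_{j-1}\mapsto b_1..b_{j-1}$, and satisfying $\psi$ under the assignment extended by all of them (these variables become bound). $\mathcal Q$ is definable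 in $\mathsf{GFO{+}C}$ if there is a formula $\varphi(x_1)$ with only free variable $x_1$ such that $(G,\mathbf b)\models\varphi(v)\iff\mathcal Q(G,\mathbf b)(v)=1$ for all $(G,\mathbf b),v$. *)

theory Defs
  imports Complex_Main
begin

text \<open>A p-labelling is b :: nat => nat => bool where
  b v i (for i < p) is the i-th bit of the label of v (bits i >= p are ignored).\<close>

definition graph :: "nat set \<Rightarrow> (nat \<Rightarrow> nat \<Rightarrow> bool) \<Rightarrow> bool" where
  "graph V E \<longleftrightarrow> finite V \<and> V \<noteq> {} \<and> (\<forall>u w. E u w \<longrightarrow> u \<in> V \<and> w \<in> V)
     \<and> (\<forall>u w. E u w \<longrightarrow> E w u) \<and> (\<forall>u. \<not> E u u)"

type_synonym query = "nat set \<Rightarrow> (nat \<Rightarrow> nat \<Rightarrow> bool) \<Rightarrow> (nat \<Rightarrow> nat \<Rightarrow> bool) \<Rightarrow> nat \<Rightarrow> bool"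

definition unary_query :: "nat \<Rightarrow> query \<Rightarrow> bool" where
  "unary_query p Q \<longleftrightarrow>
    (\<forall>V1 E1 b1 V2 E2 b2 f. graph V1 E1 \<longrightarrow> graph V2 E2 \<longrightarrow> bij_betw f V1 V2 \<longrightarrow>
       (\<forall>u\<in>V1. \<forall>w\<in>V1. E1 u w \<longleftrightarrow> E2 (f u) (f w)) \<longrightarrow>
       (\<forall>u\<in>V1. \<forall>i<p. b1 u i = b2 (f u) i) \<longrightarrow>
       (\<forall>v\<in>V1. Q V1 E1 b1 v = Q V2 E2 b2 (f v)))"

definition dyadic :: "real \<Rightarrow> bool" where
  "dyadic x \<longleftrightarrow> (\<exists>(a::int) (k::nat). x = of_int a / 2 ^ k)"

text \<open>Thresholds t_1 < ... < t_m; on the piece [t_j, t_(j+1)) (with t_0 = -inf,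
  t_(m+1) = +inf) the function is x |-> sl ! j * x + cs ! j, where j is the number of
  thresholds <= x.\<close>
definition piece_index :: "real list \<Rightarrow> real \<Rightarrow> nat" where
  "piece_index ts x = length (filter (\<lambda>t. t \<le> x) ts)"

definition rat_pwl :: "(real \<Rightarrow> real) \<Rightarrow> bool" where
  "rat_pwl L \<longleftrightarrow> (\<exists>ts sl cs. sorted_wrt (<) ts \<and> length sl = Suc (length ts)
     \<and> length cs = Suc (length ts)
     \<and> (\<forall>t\<in>set ts. dyadic t) \<and> (\<forall>a\<in>set sl. dyadic a) \<and> (\<forall>c\<in>set cs. dyadic c)
     \<and> (\<forall>x. L x = sl ! piece_index ts x * x + cs ! piece_index ts x))"

text \<open>Nodes are 0..<fnodes (numbered in a topological order of the dag: edges go from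
  smaller to larger nodes). The input nodes are listed (in order) in fins, the output
  nodes in fouts.\<close>
record fnn =
  fnodes :: nat
  fedges :: "(nat \<times> nat) set"
  fwt :: "nat \<Rightarrow> nat \<Rightarrow> real"
  fbias :: "nat \<Rightarrow> real"
  fact :: "nat \<Rightarrow> real \<Rightarrow> real"
  fins :: "nat list"
  fouts :: "nat list"

definition fnn_wf :: "fnn \<Rightarrow> bool" where
  "fnn_wf F \<longleftrightarrow> fedges F \<subseteq> {(u, v). u < v \<and> v < fnodes F}
     \<and> distinct (fins F) \<and> distinct (fouts F)
     \<and> set (fins F) = {v. v < fnodes F \<and> \<not> (\<exists>u. (u, v) \<in> fedges F)}
     \<and> set (fouts F) = {v. v < fnodes F \<and> \<not> (\<exists>w. (v, w) \<in> fedges F)}"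

fun fnn_vals :: "fnn \<Rightarrow> real list \<Rightarrow> nat \<Rightarrow> real list" where
  "fnn_vals F x 0 = []"
| "fnn_vals F x (Suc k) =
     (let vs = fnn_vals F x k in
      vs @ [if k \<in> set (fins F) then x ! (THE j. j < length (fins F) \<and> fins F ! j = k)
            else fact F k (fbias F k + (\<Sum>u\<in>{u. u < k \<and> (u, k) \<in> fedges F}. fwt F u k * vs ! u))])"

definition fnn_eval :: "fnn \<Rightarrow> real list \<Rightarrow> real list" where
  "fnn_eval F x = map (\<lambda>v. fnn_vals F x (fnodes F) ! v) (fouts F)"

definition fnn_rpwl :: "fnn \<Rightarrow> bool" where
  "fnn_rpwl F \<longleftrightarrow> (\<forall>(u, v)\<in>fedges F. dyadic (fwt F u v))
     \<and> (\<forall>v<fnodes F. v \<notin> set (fins F) \<longrightarrow>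
          dyadic (fbias F v) \<and> continuous_on UNIV (fact F v) \<and> rat_pwl (fact F v))"

datatype aggr = AggSum | AggMean | AggMax

record gnn_layer =
  lmsg :: fnn
  lagg :: aggr
  lcomb :: fnn

fun aggregate :: "aggr \<Rightarrow> nat \<Rightarrow> nat set \<Rightarrow> (nat \<Rightarrow> real list) \<Rightarrow> real list" where
  "aggregate AggSum d N m = map (\<lambda>i. \<Sum>w\<in>N. m w ! i) [0..<d]"
| "aggregate AggMean d N m =
     map (\<lambda>i. if N = {} then 0 else (\<Sum>w\<in>N. m w ! i) / real (card N)) [0..<d]"
| "aggregate AggMax d N m =
     map (\<lambda>i. if N = {} then 0 else Max ((\<lambda>w. m w ! i) ` N)) [0..<d]"

definition layer_wf :: "nat \<Rightarrow> nat \<Rightarrow> gnn_layer \<Rightarrow> bool" where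
  "layer_wf p q L \<longleftrightarrow> fnn_wf (lmsg L) \<and> fnn_wf (lcomb L)
     \<and> length (fins (lmsg L)) = 2 * p
     \<and> length (fins (lcomb L)) = p + length (fouts (lmsg L))
     \<and> length (fouts (lcomb L)) = q"

definition apply_layer :: "nat set \<Rightarrow> (nat \<Rightarrow> nat \<Rightarrow> bool) \<Rightarrow> gnn_layer
    \<Rightarrow> (nat \<Rightarrow> real list) \<Rightarrow> (nat \<Rightarrow> real list)" where
  "apply_layer V E L x = (\<lambda>v. fnn_eval (lcomb L)
      (x v @ aggregate (lagg L) (length (fouts (lmsg L))) {w \<in> V. E v w}
               (\<lambda>w. fnn_eval (lmsg L) (x v @ x w))))"

type_synonym gnn = "gnn_layer list"

fun gnn_wf :: "nat \<Rightarrow> nat \<Rightarrow> gnn \<Rightarrow> bool" where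
  "gnn_wf p q [] \<longleftrightarrow> p = q"
| "gnn_wf p q (L # Ls) \<longleftrightarrow> (\<exists>r. layer_wf p r L \<and> gnn_wf r q Ls)"

fun apply_gnn :: "nat set \<Rightarrow> (nat \<Rightarrow> nat \<Rightarrow> bool) \<Rightarrow> gnn
    \<Rightarrow> (nat \<Rightarrow> real list) \<Rightarrow> (nat \<Rightarrow> real list)" where
  "apply_gnn V E [] x = x"
| "apply_gnn V E (L # Ls) x = apply_gnn V E Ls (apply_layer V E L x)"

definition gnn_rpwl :: "gnn \<Rightarrow> bool" where
  "gnn_rpwl N \<longleftrightarrow> (\<forall>L\<in>set N. fnn_rpwl (lmsg L) \<and> fnn_rpwl (lcomb L))"

definition label_signal :: "nat \<Rightarrow> (nat \<Rightarrow> nat \<Rightarrow> bool) \<Rightarrow> nat \<Rightarrow> real list" where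
  "label_signal p b = (\<lambda>v. map (\<lambda>i. if b v i then 1 else 0) [0..<p])"

definition gnn_computes :: "nat \<Rightarrow> gnn \<Rightarrow> query \<Rightarrow> bool" where
  "gnn_computes p N Q \<longleftrightarrow> gnn_wf p 1 N \<and>
     (\<forall>V E b v. graph V E \<longrightarrow> v \<in> V \<longrightarrow>
        (Q V E b v \<longrightarrow> apply_gnn V E N (label_signal p b) v ! 0 \<ge> 3/4) \<and>
        (\<not> Q V E b v \<longrightarrow> apply_gnn V E N (label_signal p b) v ! 0 \<le> 1/4))"

definition rpwl_gnn_computable :: "nat \<Rightarrow> query \<Rightarrow> bool" where
  "rpwl_gnn_computable p Q \<longleftrightarrow> (\<exists>N. gnn_rpwl N \<and> gnn_computes p N Q)"

datatype vvar = X1 | X2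

fun other :: "vvar \<Rightarrow> vvar" where
  "other X1 = X2" | "other X2 = X1"

text \<open>CntG i g bs phi is the guarded counting term #(x_{3-i}, bs).(gamma \<and> phi) with
  guard gamma = E(x_i, x_{3-i}) if g, and E(x_{3-i}, x_i) otherwise.
  Cnt bs phi is #(bs).phi. A list of bounds BCons y theta bs stands for
  y < theta, followed by the bounds bs.\<close>
datatype nterm = NVar nat | NZero | NOne | NOrd | NPlus nterm nterm | NTimes nterm nterm
  | CntG vvar bool bnds form
  | Cnt bnds form
and bnds = BNil | BCons nat nterm bnds
and form = FLe nterm nterm | FEdge vvar vvar | FPred nat vvar | FEq vvar vvar
  | FNot form | FAnd form form

function (sequential) evalt :: "nat set \<Rightarrow> (nat \<Rightarrow> nat \<Rightarrow> bool) \<Rightarrow> (nat \<Rightarrow> nat \<Rightarrow> bool)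
      \<Rightarrow> (vvar \<Rightarrow> nat) \<Rightarrow> (nat \<Rightarrow> nat) \<Rightarrow> nterm \<Rightarrow> nat"
and cntb :: "nat set \<Rightarrow> (nat \<Rightarrow> nat \<Rightarrow> bool) \<Rightarrow> (nat \<Rightarrow> nat \<Rightarrow> bool)
      \<Rightarrow> (vvar \<Rightarrow> nat) \<Rightarrow> (nat \<Rightarrow> nat) \<Rightarrow> bnds \<Rightarrow> form \<Rightarrow> nat"
and sat :: "nat set \<Rightarrow> (nat \<Rightarrow> nat \<Rightarrow> bool) \<Rightarrow> (nat \<Rightarrow> nat \<Rightarrow> bool)
      \<Rightarrow> (vvar \<Rightarrow> nat) \<Rightarrow> (nat \<Rightarrow> nat) \<Rightarrow> form \<Rightarrow> bool"
where
  "evalt V E b \<alpha> \<beta> (NVar y) = \<beta> y"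
| "evalt V E b \<alpha> \<beta> NZero = 0"
| "evalt V E b \<alpha> \<beta> NOne = 1"
| "evalt V E b \<alpha> \<beta> NOrd = card V"
| "evalt V E b \<alpha> \<beta> (NPlus s t) = evalt V E b \<alpha> \<beta> s + evalt V E b \<alpha> \<beta> t"
| "evalt V E b \<alpha> \<beta> (NTimes s t) = evalt V E b \<alpha> \<beta> s * evalt V E b \<alpha> \<beta> t"
| "evalt V E b \<alpha> \<beta> (CntG i g bs \<phi>) =
     (\<Sum>c\<in>V. let \<alpha>' = \<alpha>(other i := c) in
        if (if g then E (\<alpha>' i) (\<alpha>' (other i)) else E (\<alpha>' (other i)) (\<alpha>' i))
        then cntb V E b \<alpha>' \<beta> bs \<phi> else 0)"
| "evalt V E b \<alpha> \<beta> (Cnt bs \<phi>) = cntb V E b \<alpha> \<beta> bs \<phi>"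
| "cntb V E b \<alpha> \<beta> BNil \<phi> = (if sat V E b \<alpha> \<beta> \<phi> then 1 else 0)"
| "cntb V E b \<alpha> \<beta> (BCons y t bs) \<phi> =
     (\<Sum>n<evalt V E b \<alpha> \<beta> t. cntb V E b \<alpha> (\<beta>(y := n)) bs \<phi>)"
| "sat V E b \<alpha> \<beta> (FLe s t) \<longleftrightarrow> evalt V E b \<alpha> \<beta> s \<le> evalt V E b \<alpha> \<beta> t"
| "sat V E b \<alpha> \<beta> (FEdge i j) \<longleftrightarrow> E (\<alpha> i) (\<alpha> j)"
| "sat V E b \<alpha> \<beta> (FPred k i) \<longleftrightarrow> b (\<alpha> i) k"
| "sat V E b \<alpha> \<beta> (FEq i j) \<longleftrightarrow> \<alpha> i = \<alpha> j"
| "sat V E b \<alpha> \<beta> (FNot \<phi>) \<longleftrightarrow> \<not> sat V E b \<alpha> \<beta> \<phi>"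
| "sat V E b \<alpha> \<beta> (FAnd \<phi> \<psi>) \<longleftrightarrow> sat V E b \<alpha> \<beta> \<phi> \<and> sat V E b \<alpha> \<beta> \<psi>"
  by pat_completeness auto
termination
  by (relation "measure (\<lambda>x. case x of
        Inl (_, _, _, _, _, t) \<Rightarrow> 2 * size t
      | Inr (Inl (_, _, _, _, _, bs, \<phi>)) \<Rightarrow> 2 * (size bs + size \<phi>) + 1
      | Inr (Inr (_, _, _, _, _, \<phi>)) \<Rightarrow> 2 * size \<phi>)") auto

fun fvt :: "nterm \<Rightarrow> vvar set" and fvb :: "bnds \<Rightarrow> vvar set" and fvf :: "form \<Rightarrow> vvar set"
where
  "fvt (NVar y) = {}" | "fvt NZero = {}" | "fvt NOne = {}" | "fvt NOrd = {}"
| "fvt (NPlus s t) = fvt s \<union> fvt t" | "fvt (NTimes s t) = fvt s \<union> fvt t"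
| "fvt (CntG i g bs \<phi>) = insert i ((fvb bs \<union> fvf \<phi>) - {other i})"
| "fvt (Cnt bs \<phi>) = fvb bs \<union> fvf \<phi>"
| "fvb BNil = {}" | "fvb (BCons y t bs) = fvt t \<union> fvb bs"
| "fvf (FLe s t) = fvt s \<union> fvt t" | "fvf (FEdge i j) = {i, j}" | "fvf (FPred k i) = {i}"
| "fvf (FEq i j) = {i, j}" | "fvf (FNot \<phi>) = fvf \<phi>" | "fvf (FAnd \<phi> \<psi>) = fvf \<phi> \<union> fvf \<psi>"

text \<open>Free number variables (the y's of a counting term are bound in later bounds and
  in the body).\<close>
function (sequential) fnt :: "nterm \<Rightarrow> nat set" and fnb :: "bnds \<Rightarrow> form \<Rightarrow> nat set" and fnf :: "form \<Rightarrow> nat set"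
where
  "fnt (NVar y) = {y}" | "fnt NZero = {}" | "fnt NOne = {}" | "fnt NOrd = {}"
| "fnt (NPlus s t) = fnt s \<union> fnt t" | "fnt (NTimes s t) = fnt s \<union> fnt t"
| "fnt (CntG i g bs \<phi>) = fnb bs \<phi>"
| "fnt (Cnt bs \<phi>) = fnb bs \<phi>"
| "fnb BNil \<phi> = fnf \<phi>" | "fnb (BCons y t bs) \<phi> = fnt t \<union> (fnb bs \<phi> - {y})"
| "fnf (FLe s t) = fnt s \<union> fnt t" | "fnf (FEdge i j) = {}" | "fnf (FPred k i) = {}"
| "fnf (FEq i j) = {}" | "fnf (FNot \<phi>) = fnf \<phi>" | "fnf (FAnd \<phi> \<psi>) = fnf \<phi> \<union> fnf \<psi>"
  by pat_completeness auto
termination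
  by (relation "measure (\<lambda>x. case x of
        Inl t \<Rightarrow> 2 * size t
      | Inr (Inl (bs, \<phi>)) \<Rightarrow> 2 * (size bs + size \<phi>) + 1
      | Inr (Inr \<phi>) \<Rightarrow> 2 * size \<phi>)") auto

text \<open>Indices of unary label predicates P_k occurring (0-based: P_k tests bit k).\<close>
fun pst :: "nterm \<Rightarrow> nat set" and psb :: "bnds \<Rightarrow> nat set" and psf :: "form \<Rightarrow> nat set"
where
  "pst (NVar y) = {}" | "pst NZero = {}" | "pst NOne = {}" | "pst NOrd = {}"
| "pst (NPlus s t) = pst s \<union> pst t" | "pst (NTimes s t) = pst s \<union> pst t"
| "pst (CntG i g bs \<phi>) = psb bs \<union> psf \<phi>"
| "pst (Cnt bs \<phi>) = psb bs \<union> psf \<phi>"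
| "psb BNil = {}" | "psb (BCons y t bs) = pst t \<union> psb bs"
| "psf (FLe s t) = pst s \<union> pst t" | "psf (FEdge i j) = {}" | "psf (FPred k i) = {k}"
| "psf (FEq i j) = {}" | "psf (FNot \<phi>) = psf \<phi>" | "psf (FAnd \<phi> \<psi>) = psf \<phi> \<union> psf \<psi>"

definition gfoc_definable :: "nat \<Rightarrow> query \<Rightarrow> bool" where
  "gfoc_definable p Q \<longleftrightarrow> (\<exists>\<phi>. fvf \<phi> \<subseteq> {X1} \<and> fnf \<phi> = {} \<and> psf \<phi> \<subseteq> {..<p} \<and>
     (\<forall>V E b v \<alpha> \<beta>. graph V E \<longrightarrow> v \<in> V \<longrightarrow> \<alpha> X1 = v \<longrightarrow>
        (sat V E b \<alpha> \<beta> \<phi> \<longleftrightarrow> Q V E b v)))"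

end

theory Submission
  imports Defs
begin

text \<open>A real number is represented by GFO+C number terms as a triple \<open>(P, N, e)\<close> standing for
  \<open>(P - N) / (2\<^sup>e R)\<close>, where the resolution \<open>R = 2\<^sup>p\<^sup>r\<^sup>e\<^sup>c |V|\<^sup>L\<close> is definable from
  \<open>ord\<close>. Since all weights, biases and breakpoints are dyadic, the feedforward networks are
  evaluated exactly on such triples: a piecewise linear activation selects its piece by counting
  the breakpoints below its argument. The features of a neighbour are obtained by swapping the two
  vertex variables, and sum and max aggregation become guarded counting terms, again exactly; only
  mean aggregation is rounded (by integer division), with an error below \<open>1/R\<close>. By Lipschitz
  continuity a layer multiplies the errors by at most \<open>|V|\<close> times the Lipschitz constants of
  its two networks, so after \<open>L\<close> layers the error is a constant times \<open>L / 2\<^sup>p\<^sup>r\<^sup>e\<^sup>c\<close>, which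
  is below \<open>1/4\<close> for large \<open>prec\<close>. Comparing the simulated output with \<open>1/2\<close> then defines
  the query.\<close>

section \<open>Number terms\<close>

lemma other_other [simp]: "other (other i) = i"
  by (cases i) auto

lemma other_neq [simp]: "other i \<noteq> i" "i \<noteq> other i"
  by (cases i; simp)+

lemma evalt_cntb_sat_num_cong:
  "(\<forall>y\<in>fnt t. \<beta> y = \<beta>' y) \<Longrightarrow> evalt V E b \<alpha> \<beta> t = evalt V E b \<alpha> \<beta>' t"
  "(\<forall>y\<in>fnb bs \<phi>. \<beta> y = \<beta>' y) \<Longrightarrow> cntb V E b \<alpha> \<beta> bs \<phi> = cntb V E b \<alpha> \<beta>' bs \<phi>"
  "(\<forall>y\<in>fnf \<phi>. \<beta> y = \<beta>' y) \<Longrightarrow> sat V E b \<alpha> \<beta> \<phi> = sat V E b \<alpha> \<beta>' \<phi>"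
proof (induction V E b \<alpha> \<beta> t and V E b \<alpha> \<beta> bs \<phi> and V E b \<alpha> \<beta> \<phi>
    arbitrary: \<beta>' and \<beta>' and \<beta>' rule: evalt_cntb_sat.induct)
  case (7 V E b \<alpha> \<beta> i g bs \<phi>)
  have "cntb V E b (\<alpha>(other i := c)) \<beta> bs \<phi> = cntb V E b (\<alpha>(other i := c)) \<beta>' bs \<phi>"
    if "c \<in> V" and "if g then E (\<alpha> i) c else E c (\<alpha> i)" for c
    by (rule "7.IH"[OF that(1) refl]) (use that "7.prems" in \<open>cases g; simp\<close>)+
  then show ?case by (auto simp: Let_def intro!: sum.cong)
next
  case (10 V E b \<alpha> \<beta> y t bs \<phi>)
  have "cntb V E b \<alpha> (\<beta>(y := n)) bs \<phi> = cntb V E b \<alpha> (\<beta>'(y := n)) bs \<phi>"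
    if "n \<in> {..<evalt V E b \<alpha> \<beta> t}" for n
    by (rule "10.IH"(2)[OF that]) (use "10.prems" in auto)
  moreover have "evalt V E b \<alpha> \<beta> t = evalt V E b \<alpha> \<beta>' t"
    using "10.IH"(1) "10.prems" by simp
  ultimately show ?case by (metis (no_types, lifting) cntb.simps(2) sum.cong)
qed (simp_all, metis+)

abbreviation eval0 :: "nat set \<Rightarrow> (nat \<Rightarrow> nat \<Rightarrow> bool) \<Rightarrow> (nat \<Rightarrow> nat \<Rightarrow> bool) \<Rightarrow> (vvar \<Rightarrow> nat)
    \<Rightarrow> nterm \<Rightarrow> nat" where
  "eval0 V E b \<alpha> t \<equiv> evalt V E b \<alpha> (\<lambda>_. 0) t"

abbreviation sat0 :: "nat set \<Rightarrow> (nat \<Rightarrow> nat \<Rightarrow> bool) \<Rightarrow> (nat \<Rightarrow> nat \<Rightarrow> bool) \<Rightarrow> (vvar \<Rightarrow> nat)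
    \<Rightarrow> form \<Rightarrow> bool" where
  "sat0 V E b \<alpha> \<phi> \<equiv> sat V E b \<alpha> (\<lambda>_. 0) \<phi>"

lemma evalt_closed: "fnt t = {} \<Longrightarrow> evalt V E b \<alpha> \<beta> t = evalt V E b \<alpha> \<beta>' t"
  and sat_closed: "fnf \<phi> = {} \<Longrightarrow> sat V E b \<alpha> \<beta> \<phi> = sat V E b \<alpha> \<beta>' \<phi>"
  by (rule evalt_cntb_sat_num_cong; simp)+

definition closed_term :: "nat \<Rightarrow> vvar set \<Rightarrow> nterm \<Rightarrow> bool" where
  "closed_term p S t \<longleftrightarrow> fvt t \<subseteq> S \<and> fnt t = {} \<and> pst t \<subseteq> {..<p}"

definition closed_form :: "nat \<Rightarrow> vvar set \<Rightarrow> form \<Rightarrow> bool" where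
  "closed_form p S \<phi> \<longleftrightarrow> fvf \<phi> \<subseteq> S \<and> fnf \<phi> = {} \<and> psf \<phi> \<subseteq> {..<p}"

lemma closed_form_fnf: "closed_form p S \<phi> \<Longrightarrow> fnf \<phi> = {}"
  by (simp add: closed_form_def)

lemma closed_term_mono: "closed_term p S t \<Longrightarrow> S \<subseteq> S' \<Longrightarrow> closed_term p S' t"
  by (auto simp: closed_term_def)

lemma closed_term_simps [simp]:
  "closed_term p S NZero" "closed_term p S NOne" "closed_term p S NOrd"
  "closed_term p S (NPlus s t) \<longleftrightarrow> closed_term p S s \<and> closed_term p S t"
  "closed_term p S (NTimes s t) \<longleftrightarrow> closed_term p S s \<and> closed_term p S t"
  by (auto simp: closed_term_def)

lemma closed_form_simps [simp]:
  "closed_form p S (FLe s t) \<longleftrightarrow> closed_term p S s \<and> closed_term p S t"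
  "closed_form p S (FAnd \<phi> \<psi>) \<longleftrightarrow> closed_form p S \<phi> \<and> closed_form p S \<psi>"
  by (auto simp: closed_term_def closed_form_def)

fun swap_term :: "nterm \<Rightarrow> nterm" and swap_bnds :: "bnds \<Rightarrow> bnds" and swap_form :: "form \<Rightarrow> form"
where
  "swap_term (NVar y) = NVar y" | "swap_term NZero = NZero" | "swap_term NOne = NOne"
| "swap_term NOrd = NOrd"
| "swap_term (NPlus s t) = NPlus (swap_term s) (swap_term t)"
| "swap_term (NTimes s t) = NTimes (swap_term s) (swap_term t)"
| "swap_term (CntG i g bs \<phi>) = CntG (other i) g (swap_bnds bs) (swap_form \<phi>)"
| "swap_term (Cnt bs \<phi>) = Cnt (swap_bnds bs) (swap_form \<phi>)"
| "swap_bnds BNil = BNil" | "swap_bnds (BCons y t bs) = BCons y (swap_term t) (swap_bnds bs)"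
| "swap_form (FLe s t) = FLe (swap_term s) (swap_term t)"
| "swap_form (FEdge i j) = FEdge (other i) (other j)"
| "swap_form (FPred k i) = FPred k (other i)" | "swap_form (FEq i j) = FEq (other i) (other j)"
| "swap_form (FNot \<phi>) = FNot (swap_form \<phi>)"
| "swap_form (FAnd \<phi> \<psi>) = FAnd (swap_form \<phi>) (swap_form \<psi>)"

lemma fun_upd_comp_other: "(\<alpha>(i := c)) \<circ> other = (\<alpha> \<circ> other)(other i := c)"
  by (rule ext) (auto simp: comp_def)

lemma evalt_cntb_sat_swap:
  "evalt V E b \<alpha> \<beta> (swap_term t) = evalt V E b (\<alpha> \<circ> other) \<beta> t"
  "cntb V E b \<alpha> \<beta> (swap_bnds bs) (swap_form \<phi>) = cntb V E b (\<alpha> \<circ> other) \<beta> bs \<phi>"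
  "sat V E b \<alpha> \<beta> (swap_form \<phi>) = sat V E b (\<alpha> \<circ> other) \<beta> \<phi>"
proof (induction V E b "\<alpha> \<circ> other" \<beta> t and V E b "\<alpha> \<circ> other" \<beta> bs \<phi>
    and V E b "\<alpha> \<circ> other" \<beta> \<phi> arbitrary: \<alpha> and \<alpha> and \<alpha> rule: evalt_cntb_sat.induct)
  case (7 V E b \<beta> i g bs \<phi> \<alpha>)
  show ?case
    using "7"(1)[OF _ fun_upd_comp_other] by (auto simp: Let_def fun_upd_comp_other intro!: sum.cong)
qed (auto simp: comp_def intro!: sum.cong)

lemma closed_term_swap:
  assumes "closed_term p S t"
  shows "closed_term p UNIV (swap_term t)"
proof -
  have "fnt (swap_term t) = fnt t" "fnb (swap_bnds bs) (swap_form \<phi>) = fnb bs \<phi>"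
    "fnf (swap_form \<phi>) = fnf \<phi>" for bs \<phi>
    by (induction t and bs \<phi> and \<phi> rule: fnt_fnb_fnf.induct) auto
  moreover have "pst (swap_term t) = pst t" "psb (swap_bnds bs) = psb bs"
    "psf (swap_form \<phi>) = psf \<phi>" for bs \<phi>
    by (induction t and bs and \<phi> rule: pst_psb_psf.induct) auto
  ultimately show ?thesis
    using assms by (simp add: closed_term_def)
qed

fun nat_term :: "nat \<Rightarrow> nterm" where
  "nat_term 0 = NZero" | "nat_term (Suc n) = NPlus (nat_term n) NOne"

lemma evalt_nat_term [simp]: "evalt V E b \<alpha> \<beta> (nat_term n) = n"
  and closed_nat_term [simp]: "closed_term p S (nat_term n)"
  by (induction n) auto

fun power_term :: "nterm \<Rightarrow> nat \<Rightarrow> nterm" where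
  "power_term t 0 = NOne" | "power_term t (Suc k) = NTimes t (power_term t k)"

lemma evalt_power_term [simp]: "evalt V E b \<alpha> \<beta> (power_term t k) = evalt V E b \<alpha> \<beta> t ^ k"
  by (induction k) auto

lemma closed_power_term [simp]: "closed_term p S t \<Longrightarrow> closed_term p S (power_term t k)"
  by (induction k) auto

definition scale_term :: "nat \<Rightarrow> nterm \<Rightarrow> nterm" where
  "scale_term c t = NTimes (nat_term c) t"

lemma evalt_scale_term [simp]: "evalt V E b \<alpha> \<beta> (scale_term c t) = c * evalt V E b \<alpha> \<beta> t"
  and closed_scale_term [simp]: "closed_term p S (scale_term c t) \<longleftrightarrow> closed_term p S t"
  by (simp_all add: scale_term_def)

definition cond_term :: "form \<Rightarrow> nterm \<Rightarrow> nterm" where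
  "cond_term \<phi> t = Cnt (BCons 0 t BNil) \<phi>"

lemma evalt_cond_term: "fnf \<phi> = {} \<Longrightarrow>
    evalt V E b \<alpha> \<beta> (cond_term \<phi> t) = (if sat V E b \<alpha> \<beta> \<phi> then evalt V E b \<alpha> \<beta> t else 0)"
  by (simp add: cond_term_def sat_closed[of \<phi> _ _ _ _ "\<beta>(0 := _)" \<beta>])

lemma closed_cond_term [simp]:
  "closed_form p S \<phi> \<Longrightarrow> closed_term p S t \<Longrightarrow> closed_term p S (cond_term \<phi> t)"
  by (auto simp: cond_term_def closed_term_def closed_form_def)

definition minus_term :: "nterm \<Rightarrow> nterm \<Rightarrow> nterm" where
  "minus_term s t = Cnt (BCons 0 s BNil) (FLe t (NVar 0))"

lemma evalt_minus_term: "fnt t = {} \<Longrightarrow>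
    evalt V E b \<alpha> \<beta> (minus_term s t) = evalt V E b \<alpha> \<beta> s - evalt V E b \<alpha> \<beta> t"
proof -
  assume "fnt t = {}"
  then have "evalt V E b \<alpha> \<beta> (minus_term s t)
      = card {evalt V E b \<alpha> \<beta> t..<evalt V E b \<alpha> \<beta> s}"
    by (simp add: minus_term_def sum.If_cases Int_def evalt_closed[of t _ _ _ _ "\<beta>(0 := _)" \<beta>]
        atLeastLessThan_def atLeast_def lessThan_def conj_commute)
  then show ?thesis by simp
qed

lemma fnt_minus_term [simp]: "fnt (minus_term s t) = fnt s \<union> (fnt t - {0})"
  by (auto simp: minus_term_def)

lemma closed_minus_term [simp]:
  "closed_term p S s \<Longrightarrow> closed_term p S t \<Longrightarrow> closed_term p S (minus_term s t)"
  by (auto simp: minus_term_def closed_term_def)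

definition div_term :: "nterm \<Rightarrow> nterm \<Rightarrow> nterm" where
  "div_term s t = Cnt (BCons 0 s BNil) (FLe (NTimes t (NPlus (NVar 0) NOne)) s)"

lemma card_mult_Suc_le_eq_div: "(d::nat) > 0 \<Longrightarrow> card {n. n < a \<and> d * (n + 1) \<le> a} = a div d"
proof -
  assume "d > 0"
  have "n < a \<and> d * (n + 1) \<le> a \<longleftrightarrow> n < a div d" for n
  proof -
    have "n < a div d \<longleftrightarrow> (n + 1) * d \<le> a"
      using \<open>d > 0\<close> by (metis Suc_eq_plus1 Suc_le_eq less_eq_div_iff_mult_less_eq)
    moreover have "n \<le> n * d"
      using \<open>d > 0\<close> by simp
    then have "n < (n + 1) * d"
      using \<open>d > 0\<close> by (simp only: distrib_right mult_1)
    ultimately show ?thesis by (auto simp: mult.commute)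
  qed
  then have "{n. n < a \<and> d * (n + 1) \<le> a} = {..<a div d}" by auto
  then show ?thesis by simp
qed

lemma evalt_div_term:
  assumes "fnt s = {}" "fnt t = {}"
  shows "evalt V E b \<alpha> \<beta> (div_term s t) =
    (if evalt V E b \<alpha> \<beta> t = 0 then evalt V E b \<alpha> \<beta> s else evalt V E b \<alpha> \<beta> s div evalt V E b \<alpha> \<beta> t)"
proof -
  let ?s = "evalt V E b \<alpha> \<beta> s" and ?t = "evalt V E b \<alpha> \<beta> t"
  have "evalt V E b \<alpha> \<beta> (div_term s t) = (\<Sum>n<?s. if ?t * (n + 1) \<le> ?s then 1 else 0)"
    using assms by (simp add: div_term_def evalt_closed[of _ _ _ _ _ "\<beta>(0 := _)" \<beta>])
  also have "\<dots> = card {n. n < ?s \<and> ?t * (n + 1) \<le> ?s}"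
    by (simp add: sum.If_cases Int_def)
  also have "\<dots> = (if ?t = 0 then ?s else ?s div ?t)"
    using card_mult_Suc_le_eq_div[of ?t ?s] by simp
  finally show ?thesis .
qed

lemma closed_div_term [simp]:
  "closed_term p S s \<Longrightarrow> closed_term p S t \<Longrightarrow> closed_term p S (div_term s t)"
  by (auto simp: div_term_def closed_term_def)

definition neighbours :: "nat set \<Rightarrow> (nat \<Rightarrow> nat \<Rightarrow> bool) \<Rightarrow> (vvar \<Rightarrow> nat) \<Rightarrow> nat set" where
  "neighbours V E \<alpha> = {c \<in> V. E (\<alpha> X1) c}"

lemma neighbours_upd_X2 [simp]: "neighbours V E (\<alpha>(X2 := c)) = neighbours V E \<alpha>"
  by (simp add: neighbours_def)

lemma finite_neighbours: "finite V \<Longrightarrow> finite (neighbours V E \<alpha>)"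
  by (simp add: neighbours_def)

lemma insert_X1_Diff_X2: "insert X1 (A - {X2}) \<subseteq> {X1}"
proof -
  have "x = X1" if "x \<noteq> X2" for x by (cases x) (use that in auto)
  then show ?thesis by auto
qed

definition nbr_sum :: "nterm \<Rightarrow> nterm" where
  "nbr_sum t = CntG X1 True (BCons 0 t BNil) (FLe NZero NZero)"

lemma evalt_nbr_sum: "finite V \<Longrightarrow>
    evalt V E b \<alpha> \<beta> (nbr_sum t) = (\<Sum>c\<in>neighbours V E \<alpha>. evalt V E b (\<alpha>(X2 := c)) \<beta> t)"
  by (simp add: nbr_sum_def neighbours_def sum.If_cases Int_def Let_def)

lemma closed_nbr_sum [simp]: "closed_term p UNIV t \<Longrightarrow> X1 \<in> S \<Longrightarrow> closed_term p S (nbr_sum t)"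
  using insert_X1_Diff_X2 by (auto simp: nbr_sum_def closed_term_def)

lemma fnt_nbr_sum [simp]: "fnt (nbr_sum t) = fnt t"
  by (auto simp: nbr_sum_def)

definition degree_term :: nterm where
  "degree_term = CntG X1 True BNil (FLe NZero NZero)"

lemma evalt_degree_term: "finite V \<Longrightarrow> evalt V E b \<alpha> \<beta> degree_term = card (neighbours V E \<alpha>)"
  by (simp add: degree_term_def neighbours_def sum.If_cases Int_def Let_def)

lemma fnt_degree_term [simp]: "fnt degree_term = {}"
  by (simp add: degree_term_def)

lemma closed_degree_term [simp]: "X1 \<in> S \<Longrightarrow> closed_term p S degree_term"
  by (auto simp: degree_term_def closed_term_def)

lemma card_below_some_eq_Max:
  fixes f :: "'a \<Rightarrow> nat"
  assumes "finite N"
  shows "card {n. n < (\<Sum>c\<in>N. f c) \<and> (\<exists>c\<in>N. n < f c)} = (if N = {} then 0 else Max (f ` N))"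
proof (cases "N = {}")
  case False
  have "Max (f ` N) \<in> f ` N"
    using assms False by simp
  then obtain c where c: "c \<in> N" "f c = Max (f ` N)"
    by (metis imageE)
  have "f c \<le> (\<Sum>c\<in>N. f c)"
    using assms c(1) by (intro member_le_sum) auto
  then have "{n. n < (\<Sum>c\<in>N. f c) \<and> (\<exists>c\<in>N. n < f c)} = {..<Max (f ` N)}"
    using assms c by (auto intro: less_le_trans[OF _ Max_ge] bexI[of _ c])
  then show ?thesis using False by simp
qed simp

text \<open>The maximum of \<open>t\<close> over the neighbours counts the \<open>y < \<Sum>\<^sub>c t(c)\<close> that lie
  below some \<open>t(c)\<close>.\<close>

definition nbr_max :: "nterm \<Rightarrow> nterm" where
  "nbr_max t =
     Cnt (BCons 0 (nbr_sum t) BNil) (FLe NOne (CntG X1 True BNil (FLe (NPlus (NVar 0) NOne) t)))"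

lemma closed_nbr_max [simp]: "closed_term p UNIV t \<Longrightarrow> X1 \<in> S \<Longrightarrow> closed_term p S (nbr_max t)"
  using insert_X1_Diff_X2 by (auto simp: nbr_max_def nbr_sum_def closed_term_def)

lemma evalt_nbr_max:
  assumes "finite V" "fnt t = {}"
  shows "evalt V E b \<alpha> \<beta> (nbr_max t) = (if neighbours V E \<alpha> = {} then 0
           else Max ((\<lambda>c. evalt V E b (\<alpha>(X2 := c)) \<beta> t) ` neighbours V E \<alpha>))"
proof -
  let ?N = "neighbours V E \<alpha>" and ?f = "\<lambda>c. evalt V E b (\<alpha>(X2 := c)) \<beta> t"
  have "evalt V E b \<alpha> (\<beta>(0 := n)) (CntG X1 True BNil (FLe (NPlus (NVar 0) NOne) t))
      = card {c \<in> ?N. n < ?f c}" for n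
    using assms by (simp add: neighbours_def Let_def sum.If_cases Int_def conj_commute Suc_le_eq
        evalt_closed[of t _ _ _ _ "\<beta>(0 := n)" \<beta>])
  moreover have "1 \<le> card {c \<in> ?N. n < ?f c} \<longleftrightarrow> (\<exists>c\<in>?N. n < ?f c)" for n
    using finite_neighbours[OF assms(1)] by (auto simp: Suc_le_eq card_gt_0_iff)
  ultimately have "evalt V E b \<alpha> \<beta> (nbr_max t)
      = card {n. n < (\<Sum>c\<in>?N. ?f c) \<and> (\<exists>c\<in>?N. n < ?f c)}"
    using assms(1) by (simp add: nbr_max_def evalt_nbr_sum[symmetric] sum.If_cases Int_def)
  then show ?thesis
    using card_below_some_eq_Max[OF finite_neighbours[OF assms(1)]] by simp
qed

section \<open>Fixed-point arithmetic with number terms\<close>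

definition pwl_repr :: "real list \<Rightarrow> real list \<Rightarrow> real list \<Rightarrow> (real \<Rightarrow> real) \<Rightarrow> bool" where
  "pwl_repr ts sl cs L \<longleftrightarrow> sorted_wrt (<) ts
     \<and> length sl = Suc (length ts) \<and> length cs = Suc (length ts)
     \<and> (\<forall>t\<in>set ts. dyadic t) \<and> (\<forall>a\<in>set sl. dyadic a) \<and> (\<forall>c\<in>set cs. dyadic c)
     \<and> (\<forall>x. L x = sl ! piece_index ts x * x + cs ! piece_index ts x)"

lemma rat_pwl_iff_pwl_repr: "rat_pwl L \<longleftrightarrow> (\<exists>ts sl cs. pwl_repr ts sl cs L)"
  by (simp add: rat_pwl_def pwl_repr_def)

type_synonym fxp = "nterm \<times> nterm \<times> nat"

definition closed_fxp :: "nat \<Rightarrow> vvar set \<Rightarrow> fxp \<Rightarrow> bool" where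
  "closed_fxp p S T \<longleftrightarrow> (case T of (P, N, e) \<Rightarrow> closed_term p S P \<and> closed_term p S N)"

lemma closed_fxp_mono: "closed_fxp p S T \<Longrightarrow> S \<subseteq> S' \<Longrightarrow> closed_fxp p S' T"
  by (auto simp: closed_fxp_def intro: closed_term_mono split: prod.splits)

definition dyadic_repr :: "real \<Rightarrow> int \<times> nat" where
  "dyadic_repr x = (SOME (a, k). x = of_int a / 2 ^ k)"

lemma dyadic_repr: "dyadic x \<Longrightarrow> dyadic_repr x = (a, k) \<Longrightarrow> x = of_int a / 2 ^ k"
  unfolding dyadic_repr_def dyadic_def by (metis (mono_tags, lifting) case_prod_conv someI_ex)

lemma divide_pow2_shift:
  "e \<le> m \<Longrightarrow> (a::real) / (2 ^ e * R) = 2 ^ (m - e) * a / (2 ^ m * R)"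
  by (simp add: power_diff field_simps)

text \<open>\<open>deg\<close> will be the number of GNN layers: sum aggregation can multiply rounding errors by
  \<open>|V|\<close> in each layer.\<close>

locale fixed_point =
  fixes prec deg :: nat
begin

definition resolution :: "nat set \<Rightarrow> real" where
  "resolution V = 2 ^ prec * real (card V) ^ deg"

lemma resolution_pos: "card V > 0 \<Longrightarrow> resolution V > 0"
  by (simp add: resolution_def)

definition resolution_term :: nterm where
  "resolution_term = NTimes (nat_term (2 ^ prec)) (power_term NOrd deg)"

lemma evalt_resolution_term [simp]: "real (evalt V E b \<alpha> \<beta> resolution_term) = resolution V"
  and closed_resolution_term [simp]: "closed_term p S resolution_term"
  by (simp_all add: resolution_term_def resolution_def)

definition fval :: "nat set \<Rightarrow> (nat \<Rightarrow> nat \<Rightarrow> bool) \<Rightarrow> (nat \<Rightarrow> nat \<Rightarrow> bool) \<Rightarrow> (vvar \<Rightarrow> nat)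
    \<Rightarrow> fxp \<Rightarrow> real" where
  "fval V E b \<alpha> T = (case T of (P, N, e) \<Rightarrow>
     (real (eval0 V E b \<alpha> P) - real (eval0 V E b \<alpha> N)) / (2 ^ e * resolution V))"

definition fzero :: fxp where
  "fzero = (NZero, NZero, 0)"

lemma fval_fzero [simp]: "fval V E b \<alpha> fzero = 0"
  and closed_fzero [simp]: "closed_fxp p S fzero"
  by (simp_all add: fzero_def fval_def closed_fxp_def)

fun fadd :: "fxp \<Rightarrow> fxp \<Rightarrow> fxp" where
  "fadd (P1, N1, e1) (P2, N2, e2) =
     (let m = max e1 e2; c1 = 2 ^ (m - e1); c2 = 2 ^ (m - e2)
      in (NPlus (scale_term c1 P1) (scale_term c2 P2), NPlus (scale_term c1 N1) (scale_term c2 N2), m))"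

lemma fval_fadd [simp]: "fval V E b \<alpha> (fadd T1 T2) = fval V E b \<alpha> T1 + fval V E b \<alpha> T2"
proof -
  obtain P1 N1 e1 P2 N2 e2 where T: "T1 = (P1, N1, e1)" "T2 = (P2, N2, e2)"
    by (cases T1, cases T2) auto
  let ?m = "max e1 e2" and ?R = "resolution V"
  define c1 c2 :: real where "c1 = 2 ^ (?m - e1)" and "c2 = 2 ^ (?m - e2)"
  define p1 n1 p2 n2 where "p1 = real (eval0 V E b \<alpha> P1)" and "n1 = real (eval0 V E b \<alpha> N1)"
    and "p2 = real (eval0 V E b \<alpha> P2)" and "n2 = real (eval0 V E b \<alpha> N2)"
  have "fval V E b \<alpha> (fadd T1 T2) = (c1 * (p1 - n1) + c2 * (p2 - n2)) / (2 ^ ?m * ?R)"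
    unfolding T fval_def c1_def c2_def p1_def n1_def p2_def n2_def
    by (simp add: Let_def algebra_simps)
  also have "\<dots> = c1 * (p1 - n1) / (2 ^ ?m * ?R) + c2 * (p2 - n2) / (2 ^ ?m * ?R)"
    by (rule add_divide_distrib)
  also have "\<dots> = fval V E b \<alpha> T1 + fval V E b \<alpha> T2"
    unfolding T fval_def c1_def c2_def p1_def n1_def p2_def n2_def
    by (simp add: divide_pow2_shift[of e1 ?m] divide_pow2_shift[of e2 ?m])
  finally show ?thesis .
qed

lemma closed_fadd [simp]: "closed_fxp p S T1 \<Longrightarrow> closed_fxp p S T2 \<Longrightarrow> closed_fxp p S (fadd T1 T2)"
  by (cases T1; cases T2) (simp add: closed_fxp_def Let_def)

definition fsum_list :: "fxp list \<Rightarrow> fxp" where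
  "fsum_list Ts = foldr fadd Ts fzero"

lemma fval_fsum_list [simp]: "fval V E b \<alpha> (fsum_list Ts) = (\<Sum>T\<leftarrow>Ts. fval V E b \<alpha> T)"
  by (induction Ts) (auto simp: fsum_list_def)

lemma closed_fsum_list [simp]: "(\<forall>T\<in>set Ts. closed_fxp p S T) \<Longrightarrow> closed_fxp p S (fsum_list Ts)"
  by (induction Ts) (auto simp: fsum_list_def)

fun fle :: "fxp \<Rightarrow> fxp \<Rightarrow> form" where
  "fle (P1, N1, e1) (P2, N2, e2) =
     (let m = max e1 e2; c1 = 2 ^ (m - e1); c2 = 2 ^ (m - e2)
      in FLe (NPlus (scale_term c1 P1) (scale_term c2 N2)) (NPlus (scale_term c2 P2) (scale_term c1 N1)))"

lemma closed_fle [simp]: "closed_fxp p S T1 \<Longrightarrow> closed_fxp p S T2 \<Longrightarrow> closed_form p S (fle T1 T2)"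
  by (cases T1; cases T2) (simp add: closed_fxp_def Let_def)

lemma sat_fle:
  assumes "card V > 0"
  shows "sat0 V E b \<alpha> (fle T1 T2) \<longleftrightarrow> fval V E b \<alpha> T1 \<le> fval V E b \<alpha> T2"
proof -
  obtain P1 N1 e1 P2 N2 e2 where T: "T1 = (P1, N1, e1)" "T2 = (P2, N2, e2)"
    by (cases T1, cases T2) auto
  let ?m = "max e1 e2"
  define c1 c2 :: real where "c1 = 2 ^ (?m - e1)" and "c2 = 2 ^ (?m - e2)"
  define p1 n1 p2 n2 where "p1 = real (eval0 V E b \<alpha> P1)" and "n1 = real (eval0 V E b \<alpha> N1)"
    and "p2 = real (eval0 V E b \<alpha> P2)" and "n2 = real (eval0 V E b \<alpha> N2)"
  have pos: "2 ^ ?m * resolution V > 0"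
    using resolution_pos[OF assms] by simp
  have "sat0 V E b \<alpha> (fle T1 T2) \<longleftrightarrow> c1 * p1 + c2 * n2 \<le> c2 * p2 + c1 * n1"
    unfolding T c1_def c2_def p1_def n1_def p2_def n2_def
    by (simp add: Let_def)
      (simp only: of_nat_le_iff[symmetric, where 'a=real] of_nat_add of_nat_mult of_nat_power
        of_nat_numeral)
  also have "\<dots> \<longleftrightarrow> c1 * (p1 - n1) / (2 ^ ?m * resolution V) \<le> c2 * (p2 - n2) / (2 ^ ?m * resolution V)"
    using pos by (simp add: divide_le_cancel algebra_simps)
  also have "\<dots> \<longleftrightarrow> fval V E b \<alpha> T1 \<le> fval V E b \<alpha> T2"
    unfolding T fval_def c1_def c2_def p1_def n1_def p2_def n2_def
    by (simp add: divide_pow2_shift[of e1 ?m] divide_pow2_shift[of e2 ?m])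
  finally show ?thesis .
qed

definition fmult_frac :: "int \<Rightarrow> nat \<Rightarrow> fxp \<Rightarrow> fxp" where
  "fmult_frac a k T = (case T of (P, N, e) \<Rightarrow>
     if 0 \<le> a then (scale_term (nat a) P, scale_term (nat a) N, e + k)
     else (scale_term (nat (- a)) N, scale_term (nat (- a)) P, e + k))"

lemma fval_fmult_frac: "fval V E b \<alpha> (fmult_frac a k T) = of_int a / 2 ^ k * fval V E b \<alpha> T"
proof -
  obtain P N e where T: "T = (P, N, e)" by (cases T) auto
  have "real (nat \<bar>a\<bar>) = \<bar>of_int a\<bar>" by simp
  then show ?thesis
    by (cases "0 \<le> a") (auto simp: fval_def fmult_frac_def T power_add field_simps)
qed

definition fconst_frac :: "int \<Rightarrow> nat \<Rightarrow> fxp" where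
  "fconst_frac a k = (if 0 \<le> a then (scale_term (nat a) resolution_term, NZero, k)
     else (NZero, scale_term (nat (- a)) resolution_term, k))"

lemma fval_fconst_frac: "card V > 0 \<Longrightarrow> fval V E b \<alpha> (fconst_frac a k) = of_int a / 2 ^ k"
  using resolution_pos[of V] by (auto simp: fval_def fconst_frac_def field_simps)

definition fmult :: "real \<Rightarrow> fxp \<Rightarrow> fxp" where
  "fmult x T = (case dyadic_repr x of (a, k) \<Rightarrow> fmult_frac a k T)"

definition fconst :: "real \<Rightarrow> fxp" where
  "fconst x = (case dyadic_repr x of (a, k) \<Rightarrow> fconst_frac a k)"

lemma fval_fmult [simp]: "dyadic x \<Longrightarrow> fval V E b \<alpha> (fmult x T) = x * fval V E b \<alpha> T"
  and fval_fconst [simp]: "dyadic x \<Longrightarrow> card V > 0 \<Longrightarrow> fval V E b \<alpha> (fconst x) = x"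
  by (auto simp: fmult_def fconst_def fval_fmult_frac fval_fconst_frac dest: dyadic_repr
      split: prod.splits)

lemma closed_fmult [simp]: "closed_fxp p S T \<Longrightarrow> closed_fxp p S (fmult x T)"
  and closed_fconst [simp]: "closed_fxp p S (fconst x)"
  by (auto simp: fmult_def fmult_frac_def fconst_def fconst_frac_def closed_fxp_def
      split: prod.splits)

definition fcond :: "form \<Rightarrow> fxp \<Rightarrow> fxp" where
  "fcond \<phi> T = (case T of (P, N, e) \<Rightarrow> (cond_term \<phi> P, cond_term \<phi> N, e))"

lemma fval_fcond [simp]: "fnf \<phi> = {} \<Longrightarrow>
    fval V E b \<alpha> (fcond \<phi> T) = (if sat0 V E b \<alpha> \<phi> then fval V E b \<alpha> T else 0)"
  by (auto simp: fval_def fcond_def evalt_cond_term split: prod.splits)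

lemma closed_fcond [simp]: "closed_fxp p S T \<Longrightarrow> closed_form p S \<phi> \<Longrightarrow> closed_fxp p S (fcond \<phi> T)"
  by (auto simp: closed_fxp_def fcond_def split: prod.splits)

definition fcount_le :: "real list \<Rightarrow> fxp \<Rightarrow> nterm" where
  "fcount_le ts T = foldr (\<lambda>t acc. NPlus (cond_term (fle (fconst t) T) NOne) acc) ts NZero"

lemma closed_fcount_le [simp]: "closed_fxp p S T \<Longrightarrow> closed_term p S (fcount_le ts T)"
  by (induction ts) (auto simp: fcount_le_def)

lemma evalt_fcount_le:
  assumes "closed_fxp p S T" "card V > 0" "\<forall>t\<in>set ts. dyadic t"
  shows "eval0 V E b \<alpha> (fcount_le ts T) = piece_index ts (fval V E b \<alpha> T)"
  using assms(3)
proof (induction ts)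
  case (Cons t ts)
  have "fnf (fle (fconst t) T) = {}"
    using assms(1) by (intro closed_form_fnf[of p S]) simp
  moreover have "sat0 V E b \<alpha> (fle (fconst t) T) \<longleftrightarrow> t \<le> fval V E b \<alpha> T"
    using sat_fle[OF assms(2)] Cons.prems assms(2) by simp
  ultimately show ?case
    using Cons by (simp add: fcount_le_def piece_index_def evalt_cond_term)
qed (simp add: fcount_le_def piece_index_def)

definition eq_form :: "nterm \<Rightarrow> nterm \<Rightarrow> form" where
  "eq_form s t = FAnd (FLe s t) (FLe t s)"

lemma sat_eq_form [simp]: "sat V E b \<alpha> \<beta> (eq_form s t) \<longleftrightarrow> evalt V E b \<alpha> \<beta> s = evalt V E b \<alpha> \<beta> t"
  and closed_eq_form [simp]: "closed_form p S (eq_form s t) \<longleftrightarrow> closed_term p S s \<and> closed_term p S t"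
  by (auto simp: eq_form_def)

definition fpwl :: "real list \<Rightarrow> real list \<Rightarrow> real list \<Rightarrow> fxp \<Rightarrow> fxp" where
  "fpwl ts sl cs T = fsum_list (map (\<lambda>j. fcond (eq_form (fcount_le ts T) (nat_term j))
       (fadd (fmult (sl ! j) T) (fconst (cs ! j)))) [0..<Suc (length ts)])"

lemma closed_fpwl [simp]: "closed_fxp p S T \<Longrightarrow> closed_fxp p S (fpwl ts sl cs T)"
  by (auto simp: fpwl_def)

lemma fval_fpwl:
  assumes "closed_fxp p S T" "card V > 0" "pwl_repr ts sl cs L"
  shows "fval V E b \<alpha> (fpwl ts sl cs T) = L (fval V E b \<alpha> T)"
proof -
  let ?x = "fval V E b \<alpha> T"
  let ?k = "piece_index ts ?x"
  have k: "?k < Suc (length ts)"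
    by (simp add: piece_index_def le_imp_less_Suc)
  have "fval V E b \<alpha> (fcond (eq_form (fcount_le ts T) (nat_term j))
       (fadd (fmult (sl ! j) T) (fconst (cs ! j)))) = (if j = ?k then sl ! j * ?x + cs ! j else 0)"
    if "j < Suc (length ts)" for j
  proof -
    have "fnf (eq_form (fcount_le ts T) (nat_term j)) = {}"
      using assms(1) by (intro closed_form_fnf[of p S]) simp
    moreover have "eval0 V E b \<alpha> (fcount_le ts T) = ?k"
      using evalt_fcount_le[OF assms(1,2)] assms(3) by (simp add: pwl_repr_def)
    moreover have "dyadic (sl ! j)" "dyadic (cs ! j)"
      using that assms(3) by (auto simp: pwl_repr_def)
    ultimately show ?thesis
      using assms(2) by (cases "j = ?k") simp_all
  qed
  then have "fval V E b \<alpha> (fpwl ts sl cs T)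
      = (\<Sum>j\<leftarrow>[0..<Suc (length ts)]. if j = ?k then sl ! j * ?x + cs ! j else 0)"
    unfolding fpwl_def fval_fsum_list map_map comp_def
    by (intro arg_cong[where f = sum_list] map_cong) auto
  also have "\<dots> = sl ! ?k * ?x + cs ! ?k"
    using k by (simp add: sum_list_distinct_conv_sum_set)
  also have "\<dots> = L ?x"
    using assms(3) by (simp add: pwl_repr_def)
  finally show ?thesis .
qed

definition fapply :: "(real \<Rightarrow> real) \<Rightarrow> fxp \<Rightarrow> fxp" where
  "fapply L T = (case SOME (ts, sl, cs). pwl_repr ts sl cs L of (ts, sl, cs) \<Rightarrow> fpwl ts sl cs T)"

lemma closed_fapply [simp]: "closed_fxp p S T \<Longrightarrow> closed_fxp p S (fapply L T)"
  by (simp add: fapply_def split: prod.splits)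

lemma fval_fapply:
  assumes "rat_pwl L" "closed_fxp p S T" "card V > 0"
  shows "fval V E b \<alpha> (fapply L T) = L (fval V E b \<alpha> T)"
proof -
  obtain ts sl cs where "(SOME (ts, sl, cs). pwl_repr ts sl cs L) = (ts, sl, cs)"
    by (metis prod_cases3)
  moreover have "\<exists>r. (case r of (ts, sl, cs) \<Rightarrow> pwl_repr ts sl cs L)"
    using assms(1) by (auto simp: rat_pwl_iff_pwl_repr)
  ultimately have "pwl_repr ts sl cs L" "fapply L T = fpwl ts sl cs T"
    using someI_ex[of "\<lambda>(ts, sl, cs). pwl_repr ts sl cs L"] by (auto simp: fapply_def)
  then show ?thesis using fval_fpwl[OF assms(2,3)] by simp
qed

end

section \<open>Feedforward networks\<close>

abbreviation input_index :: "fnn \<Rightarrow> nat \<Rightarrow> nat" where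
  "input_index F k \<equiv> THE j. j < length (fins F) \<and> fins F ! j = k"

lemma input_index_less: "fnn_wf F \<Longrightarrow> k \<in> set (fins F) \<Longrightarrow> input_index F k < length (fins F)"
  using theI'[OF distinct_Ex1[of "fins F" k]] by (simp add: fnn_wf_def)

lemma length_fnn_vals [simp]: "length (fnn_vals F x k) = k"
  by (induction k) (auto simp: Let_def)

lemma fouts_less_fnodes: "fnn_wf F \<Longrightarrow> v \<in> set (fouts F) \<Longrightarrow> v < fnodes F"
  by (auto simp: fnn_wf_def)

context fixed_point
begin

fun fnn_fvals :: "fnn \<Rightarrow> fxp list \<Rightarrow> nat \<Rightarrow> fxp list" where
  "fnn_fvals F Ts 0 = []"
| "fnn_fvals F Ts (Suc k) = (let vs = fnn_fvals F Ts k in vs @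
     [if k \<in> set (fins F) then Ts ! input_index F k
      else fapply (fact F k) (fadd (fconst (fbias F k))
        (fsum_list (map (\<lambda>u. fmult (fwt F u k) (vs ! u)) (filter (\<lambda>u. (u, k) \<in> fedges F) [0..<k]))))])"

definition fnn_feval :: "fnn \<Rightarrow> fxp list \<Rightarrow> fxp list" where
  "fnn_feval F Ts = map (\<lambda>v. fnn_fvals F Ts (fnodes F) ! v) (fouts F)"

lemma length_fnn_fvals [simp]: "length (fnn_fvals F Ts k) = k"
  by (induction k) (auto simp: Let_def)

lemma length_fnn_feval [simp]: "length (fnn_feval F Ts) = length (fouts F)"
  by (simp add: fnn_feval_def)

lemma closed_fnn_fvals:
  assumes "fnn_wf F" "length Ts = length (fins F)" "\<forall>T\<in>set Ts. closed_fxp p S T"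
  shows "u < k \<Longrightarrow> closed_fxp p S (fnn_fvals F Ts k ! u)"
proof (induction k arbitrary: u)
  case (Suc k)
  then show ?case
    using assms input_index_less[OF assms(1)]
    by (cases "u < k") (auto simp: Let_def nth_append less_Suc_eq)
qed simp

lemma closed_fnn_feval:
  assumes "fnn_wf F" "length Ts = length (fins F)" "\<forall>T\<in>set Ts. closed_fxp p S T"
  shows "\<forall>T\<in>set (fnn_feval F Ts). closed_fxp p S T"
  using closed_fnn_fvals[OF assms] fouts_less_fnodes[OF assms(1)] by (auto simp: fnn_feval_def)

lemma fval_fnn_fvals:
  assumes wf: "fnn_wf F" and rpwl: "fnn_rpwl F" and len: "length Ts = length (fins F)"
    and closed: "\<forall>T\<in>set Ts. closed_fxp p S T" and V: "card V > 0"
    and inputs: "map (fval V E b \<alpha>) Ts = x"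
  shows "k \<le> fnodes F \<Longrightarrow> u < k \<Longrightarrow> fval V E b \<alpha> (fnn_fvals F Ts k ! u) = fnn_vals F x k ! u"
proof (induction k arbitrary: u)
  case (Suc k)
  let ?us = "filter (\<lambda>u. (u, k) \<in> fedges F) [0..<k]"
  have node: "fval V E b \<alpha> (fnn_fvals F Ts (Suc k) ! k) = fnn_vals F x (Suc k) ! k"
  proof (cases "k \<in> set (fins F)")
    case True
    then show ?thesis
      using inputs input_index_less[OF wf True] len by (auto simp: Let_def nth_append)
  next
    case False
    let ?arg = "fadd (fconst (fbias F k))
      (fsum_list (map (\<lambda>u. fmult (fwt F u k) (fnn_fvals F Ts k ! u)) ?us))"
    have k: "k < fnodes F" using Suc.prems by simp
    then have rpwl_k: "dyadic (fbias F k)" "rat_pwl (fact F k)"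
      using rpwl False by (auto simp: fnn_rpwl_def)
    have "fval V E b \<alpha> (fmult (fwt F u k) (fnn_fvals F Ts k ! u)) = fwt F u k * fnn_vals F x k ! u"
      if "u \<in> set ?us" for u
      using that rpwl Suc.IH[of u] Suc.prems by (auto simp: fnn_rpwl_def)
    then have "fval V E b \<alpha> ?arg
        = fbias F k + (\<Sum>u\<in>{u. u < k \<and> (u, k) \<in> fedges F}. fwt F u k * fnn_vals F x k ! u)"
      using rpwl_k(1) V by (simp add: comp_def sum_list_distinct_conv_sum_set cong: map_cong)
    moreover have "closed_fxp p S ?arg"
      using closed_fnn_fvals[OF wf len closed] by auto
    ultimately show ?thesis
      using False fval_fapply[OF rpwl_k(2) _ V] by (simp add: Let_def nth_append)
  qed
  show ?case
    using Suc node by (cases "u < k") (auto simp: Let_def nth_append less_Suc_eq)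
qed simp

lemma fval_fnn_feval:
  assumes "fnn_wf F" "fnn_rpwl F" "length Ts = length (fins F)"
    "\<forall>T\<in>set Ts. closed_fxp p S T" "card V > 0" "map (fval V E b \<alpha>) Ts = x"
  shows "map (fval V E b \<alpha>) (fnn_feval F Ts) = fnn_eval F x"
  using fval_fnn_fvals[OF assms, of "fnodes F"] fouts_less_fnodes[OF assms(1)]
  by (auto simp: fnn_feval_def fnn_eval_def intro!: nth_equalityI)

end

subsection \<open>Lipschitz bounds\<close>

lemma continuous_eq_at_right_end:
  fixes f g :: "real \<Rightarrow> real"
  assumes "continuous_on UNIV f" "continuous_on UNIV g" "x < t"
    and "\<And>s. x < s \<Longrightarrow> s < t \<Longrightarrow> f s = g s"
  shows "f t = g t"
proof -
  have "(f \<longlongrightarrow> f t) (at_left t)" "(g \<longlongrightarrow> g t) (at_left t)"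
    using assms(1,2) by (auto simp: continuous_on_eq_continuous_at isCont_def
        intro: filterlim_mono[OF _ order_refl at_le, rotated])
  moreover have "eventually (\<lambda>s. f s = g s) (at_left t)"
    using eventually_at_left_real[OF assms(3)] by eventually_elim (use assms(4) in simp)
  ultimately have "(f \<longlongrightarrow> g t) (at_left t)" "(f \<longlongrightarrow> f t) (at_left t)"
    using tendsto_cong by blast+
  then show ?thesis
    using tendsto_unique[OF trivial_limit_at_left_real] by blast
qed

lemma piece_index_eq:
  assumes "x \<le> y" "\<forall>t\<in>set ts. \<not> (x < t \<and> t \<le> y)"
  shows "piece_index ts y = piece_index ts x"
proof -
  have "filter (\<lambda>t. t \<le> y) ts = filter (\<lambda>t. t \<le> x) ts"
    using assms by (intro filter_cong) (auto simp: not_less)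
  then show ?thesis by (simp add: piece_index_def)
qed

lemma pwl_repr_linear_up_to:
  assumes "pwl_repr ts sl cs L" "continuous_on UNIV L" "x < t"
    and "\<forall>t'\<in>set ts. \<not> (x < t' \<and> t' < t)"
  shows "L t = sl ! piece_index ts x * t + cs ! piece_index ts x"
proof (rule continuous_eq_at_right_end[OF assms(2) _ assms(3)])
  show "continuous_on UNIV (\<lambda>s. sl ! piece_index ts x * s + cs ! piece_index ts x)"
    by (intro continuous_intros)
  fix s assume "x < s" "s < t"
  then have "piece_index ts s = piece_index ts x"
    using assms(4) by (intro piece_index_eq) auto
  then show "L s = sl ! piece_index ts x * s + cs ! piece_index ts x"
    using assms(1) by (simp add: pwl_repr_def)
qed

text \<open>On each piece the slope is bounded by \<open>M\<close>; by continuity the linear formula also holds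
  at the right end of a piece, so one can walk from \<open>x\<close> to \<open>y\<close> threshold by threshold.\<close>

lemma pwl_repr_diff_le:
  assumes repr: "pwl_repr ts sl cs L" and cont: "continuous_on UNIV L"
    and slope: "\<And>x. \<bar>sl ! piece_index ts x\<bar> \<le> M" and "x \<le> y"
  shows "\<bar>L y - L x\<bar> \<le> M * (y - x)"
  using assms(4)
proof (induction "card {t \<in> set ts. x < t \<and> t \<le> y}" arbitrary: x rule: less_induct)
  case less
  let ?S = "{t \<in> set ts. x < t \<and> t \<le> y}" and ?k = "piece_index ts x"
  have L: "L z = sl ! piece_index ts z * z + cs ! piece_index ts z" for z
    using repr by (simp add: pwl_repr_def)
  show ?case
  proof (cases "?S = {}")
    case True
    then have "L y - L x = sl ! ?k * (y - x)"
      using L[of x] L[of y] piece_index_eq[OF less.prems] by (auto simp: algebra_simps)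
    then show ?thesis
      using slope[of x] less.prems by (simp add: abs_mult mult_right_mono)
  next
    case False
    define t where "t = Min ?S"
    have fin: "finite ?S" by simp
    have t_in: "t \<in> ?S"
      unfolding t_def using fin False by (rule Min_in)
    have t_min: "t \<le> t'" if "t' \<in> ?S" for t'
      unfolding t_def using fin that by (rule Min_le)
    have "L t = sl ! ?k * t + cs ! ?k"
    proof (rule pwl_repr_linear_up_to[OF repr cont])
      show "x < t"
        using t_in by simp
      show "\<forall>t'\<in>set ts. \<not> (x < t' \<and> t' < t)"
      proof (intro ballI notI)
        fix t' assume "t' \<in> set ts" "x < t' \<and> t' < t"
        moreover have "t \<le> y"
          using t_in by simp
        ultimately show False
          using t_min[of t'] by simp
      qed
    qed
    then have "\<bar>L t - L x\<bar> \<le> M * (t - x)"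
      using L[of x] slope[of x] t_in by (simp add: abs_mult mult_right_mono flip: right_diff_distrib)
    moreover have "{t' \<in> set ts. t < t' \<and> t' \<le> y} \<subset> ?S"
      using t_in by auto
    then have "\<bar>L y - L t\<bar> \<le> M * (y - t)"
      using less.hyps[OF psubset_card_mono[OF fin]] t_in by simp
    ultimately have "\<bar>L y - L t\<bar> + \<bar>L t - L x\<bar> \<le> M * (y - x)"
      by (simp add: algebra_simps)
    then show ?thesis
      using abs_triangle_ineq[of "L y - L t" "L t - L x"] by simp
  qed
qed

lemma rat_pwl_lipschitz:
  assumes "rat_pwl L" "continuous_on UNIV L"
  shows "\<exists>M\<ge>0. \<forall>x y. \<bar>L x - L y\<bar> \<le> M * \<bar>x - y\<bar>"
proof -
  obtain ts sl cs where repr: "pwl_repr ts sl cs L"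
    using assms(1) by (auto simp: rat_pwl_iff_pwl_repr)
  define M where "M = (\<Sum>a\<in>set sl. \<bar>a\<bar>)"
  have slope: "\<bar>sl ! piece_index ts x\<bar> \<le> M" for x
  proof -
    have "piece_index ts x < length sl"
      using repr by (simp add: pwl_repr_def piece_index_def le_imp_less_Suc)
    then show ?thesis
      unfolding M_def by (intro member_le_sum[where f = abs]) auto
  qed
  have "\<bar>L x - L y\<bar> \<le> M * \<bar>x - y\<bar>" for x y
    using pwl_repr_diff_le[OF repr assms(2) slope, of x y] pwl_repr_diff_le[OF repr assms(2) slope, of y x]
    by (cases "x \<le> y") (simp_all add: abs_minus_commute)
  moreover have "M \<ge> 0"
    unfolding M_def by (rule sum_nonneg) simp
  ultimately show ?thesis by blast
qed

definition act_lip :: "fnn \<Rightarrow> nat \<Rightarrow> real" where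
  "act_lip F v = (SOME M. M \<ge> 0 \<and> (\<forall>x y. \<bar>fact F v x - fact F v y\<bar> \<le> M * \<bar>x - y\<bar>))"

lemma act_lip:
  assumes "fnn_rpwl F" "v < fnodes F" "v \<notin> set (fins F)"
  shows "act_lip F v \<ge> 0" "\<bar>fact F v x - fact F v y\<bar> \<le> act_lip F v * \<bar>x - y\<bar>"
proof -
  have "rat_pwl (fact F v)" "continuous_on UNIV (fact F v)"
    using assms by (auto simp: fnn_rpwl_def)
  from someI_ex[OF rat_pwl_lipschitz[OF this]]
  show "act_lip F v \<ge> 0" "\<bar>fact F v x - fact F v y\<bar> \<le> act_lip F v * \<bar>x - y\<bar>"
    unfolding act_lip_def by blast+
qed

definition in_weight :: "fnn \<Rightarrow> nat \<Rightarrow> real" where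
  "in_weight F v = (\<Sum>u\<in>{u. u < v \<and> (u, v) \<in> fedges F}. \<bar>fwt F u v\<bar>)"

definition node_lip :: "fnn \<Rightarrow> real" where
  "node_lip F = 1 + (\<Sum>v\<in>{v. v < fnodes F \<and> v \<notin> set (fins F)}. act_lip F v * in_weight F v)"

lemma node_lip_ge:
  assumes "fnn_rpwl F"
  shows "node_lip F \<ge> 1" "v < fnodes F \<Longrightarrow> v \<notin> set (fins F) \<Longrightarrow> act_lip F v * in_weight F v \<le> node_lip F"
proof -
  let ?V = "{v. v < fnodes F \<and> v \<notin> set (fins F)}" and ?c = "\<lambda>v. act_lip F v * in_weight F v"
  have nonneg: "?c v \<ge> 0" if "v \<in> ?V" for v
    using act_lip(1)[OF assms] that by (simp add: in_weight_def sum_nonneg)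
  then have "sum ?c ?V \<ge> 0"
    by (rule sum_nonneg)
  then show "node_lip F \<ge> 1"
    unfolding node_lip_def by simp
  have "?c v \<le> sum ?c ?V" if "v \<in> ?V"
    using that nonneg by (intro member_le_sum) auto
  then show "?c v \<le> node_lip F" if "v < fnodes F" "v \<notin> set (fins F)"
    using that \<open>sum ?c ?V \<ge> 0\<close> unfolding node_lip_def by simp
qed

lemma fnn_vals_node_lipschitz:
  assumes rpwl: "fnn_rpwl F" and k: "k < fnodes F" "k \<notin> set (fins F)" and "\<epsilon> \<ge> 0"
    and prev: "\<And>u. u < k \<Longrightarrow> \<bar>fnn_vals F x k ! u - fnn_vals F y k ! u\<bar> \<le> \<epsilon>"
  shows "\<bar>fnn_vals F x (Suc k) ! k - fnn_vals F y (Suc k) ! k\<bar> \<le> node_lip F * \<epsilon>"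
proof -
  let ?S = "{u. u < k \<and> (u, k) \<in> fedges F}"
  let ?ax = "fbias F k + (\<Sum>u\<in>?S. fwt F u k * fnn_vals F x k ! u)"
  let ?ay = "fbias F k + (\<Sum>u\<in>?S. fwt F u k * fnn_vals F y k ! u)"
  have "\<bar>?ax - ?ay\<bar> \<le> (\<Sum>u\<in>?S. \<bar>fwt F u k\<bar> * \<bar>fnn_vals F x k ! u - fnn_vals F y k ! u\<bar>)"
    by (simp add: abs_mult sum_abs[THEN order_trans] flip: sum_subtractf right_diff_distrib)
  also have "\<dots> \<le> in_weight F k * \<epsilon>"
    unfolding in_weight_def sum_distrib_right using prev by (intro sum_mono mult_left_mono) auto
  finally have sum: "\<bar>?ax - ?ay\<bar> \<le> in_weight F k * \<epsilon>" .
  have "\<bar>fnn_vals F x (Suc k) ! k - fnn_vals F y (Suc k) ! k\<bar> = \<bar>fact F k ?ax - fact F k ?ay\<bar>"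
    using k(2) by (simp add: Let_def nth_append)
  also have "\<dots> \<le> act_lip F k * \<bar>?ax - ?ay\<bar>"
    by (rule act_lip(2)[OF rpwl k])
  also have "\<dots> \<le> act_lip F k * (in_weight F k * \<epsilon>)"
    using act_lip(1)[OF rpwl k] sum by (rule mult_left_mono[rotated])
  also have "\<dots> \<le> node_lip F * \<epsilon>"
    using node_lip_ge(2)[OF rpwl k] \<open>\<epsilon> \<ge> 0\<close> by (simp add: mult.assoc[symmetric] mult_right_mono)
  finally show ?thesis .
qed

lemma fnn_vals_lipschitz:
  assumes wf: "fnn_wf F" and rpwl: "fnn_rpwl F" and "\<delta> \<ge> 0"
    and inputs: "\<forall>j<length (fins F). \<bar>x ! j - y ! j\<bar> \<le> \<delta>"
  shows "k \<le> fnodes F \<Longrightarrow> u < k \<Longrightarrow> \<bar>fnn_vals F x k ! u - fnn_vals F y k ! u\<bar> \<le> node_lip F ^ k * \<delta>"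
proof (induction k arbitrary: u)
  case (Suc k)
  have lip: "node_lip F \<ge> 1"
    using node_lip_ge(1)[OF rpwl] .
  have IH: "\<bar>fnn_vals F x k ! u - fnn_vals F y k ! u\<bar> \<le> node_lip F ^ k * \<delta>" if "u < k" for u
    using Suc that by simp
  have new: "\<bar>fnn_vals F x (Suc k) ! k - fnn_vals F y (Suc k) ! k\<bar> \<le> node_lip F ^ Suc k * \<delta>"
  proof (cases "k \<in> set (fins F)")
    case True
    then have "\<bar>fnn_vals F x (Suc k) ! k - fnn_vals F y (Suc k) ! k\<bar> \<le> \<delta>"
      using inputs input_index_less[OF wf True] by (simp add: Let_def nth_append)
    also have "\<dots> \<le> node_lip F ^ Suc k * \<delta>"
      using mult_right_mono[OF one_le_power[OF lip] \<open>\<delta> \<ge> 0\<close>, of "Suc k"] by simp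
    finally show ?thesis .
  next
    case False
    then show ?thesis
      using fnn_vals_node_lipschitz[OF rpwl _ False _ IH] Suc.prems \<open>\<delta> \<ge> 0\<close> lip by simp
  qed
  have mono: "node_lip F ^ k * \<delta> \<le> node_lip F ^ Suc k * \<delta>"
    using lip \<open>\<delta> \<ge> 0\<close> by (intro mult_right_mono power_increasing) auto
  show ?case
  proof (cases "u < k")
    case True
    then show ?thesis
      using IH[OF True] mono by (simp add: Let_def nth_append)
  next
    case False
    then show ?thesis
      using new Suc.prems(2) by (simp add: less_Suc_eq)
  qed
qed simp

definition fnn_lip :: "fnn \<Rightarrow> real" where
  "fnn_lip F = node_lip F ^ fnodes F"

lemma fnn_lip_ge_1: "fnn_rpwl F \<Longrightarrow> fnn_lip F \<ge> 1"
  unfolding fnn_lip_def using node_lip_ge(1) by (simp add: one_le_power)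

definition close_lists :: "real \<Rightarrow> real list \<Rightarrow> real list \<Rightarrow> bool" where
  "close_lists \<delta> xs ys \<longleftrightarrow> length xs = length ys \<and> (\<forall>k<length xs. \<bar>xs ! k - ys ! k\<bar> \<le> \<delta>)"

lemma close_lists_append:
  "close_lists \<delta> xs ys \<Longrightarrow> close_lists \<delta> zs ws \<Longrightarrow> close_lists \<delta> (xs @ zs) (ys @ ws)"
  by (auto simp: close_lists_def nth_append)

lemma close_lists_mono: "close_lists \<delta> xs ys \<Longrightarrow> \<delta> \<le> \<delta>' \<Longrightarrow> close_lists \<delta>' xs ys"
  by (force simp: close_lists_def)

lemma fnn_eval_lipschitz:
  assumes "fnn_wf F" "fnn_rpwl F" "\<delta> \<ge> 0" "length x = length (fins F)" "close_lists \<delta> x y"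
  shows "close_lists (fnn_lip F * \<delta>) (fnn_eval F x) (fnn_eval F y)"
proof -
  have "\<forall>j<length (fins F). \<bar>x ! j - y ! j\<bar> \<le> \<delta>"
    using assms(4,5) by (simp add: close_lists_def)
  from fnn_vals_lipschitz[OF assms(1-3) this order_refl] show ?thesis
    using fouts_less_fnodes[OF assms(1)] by (simp add: close_lists_def fnn_eval_def fnn_lip_def)
qed

section \<open>Aggregation\<close>

fun agg_coord :: "aggr \<Rightarrow> nat set \<Rightarrow> (nat \<Rightarrow> real) \<Rightarrow> real" where
  "agg_coord AggSum N f = (\<Sum>w\<in>N. f w)"
| "agg_coord AggMean N f = (if N = {} then 0 else (\<Sum>w\<in>N. f w) / real (card N))"
| "agg_coord AggMax N f = (if N = {} then 0 else Max (f ` N))"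

lemma aggregate_nth: "i < d \<Longrightarrow> aggregate a d N m ! i = agg_coord a N (\<lambda>w. m w ! i)"
  by (cases a) simp_all

lemma length_aggregate [simp]: "length (aggregate a d N m) = d"
  by (cases a) simp_all

lemma sum_diff_abs_le:
  fixes f g :: "'a \<Rightarrow> real"
  assumes "\<forall>c\<in>N. \<bar>f c - g c\<bar> \<le> \<epsilon>"
  shows "\<bar>sum f N - sum g N\<bar> \<le> real (card N) * \<epsilon>"
proof -
  have "\<bar>sum f N - sum g N\<bar> \<le> (\<Sum>c\<in>N. \<bar>f c - g c\<bar>)"
    by (simp add: sum_abs flip: sum_subtractf)
  also have "\<dots> \<le> real (card N) * \<epsilon>"
    using assms sum_bounded_above[of N "\<lambda>c. \<bar>f c - g c\<bar>" \<epsilon>] by simp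
  finally show ?thesis .
qed

lemma Max_image_diff_abs_le:
  fixes f g :: "'a \<Rightarrow> real"
  assumes "finite N" "N \<noteq> {}" "\<forall>c\<in>N. \<bar>f c - g c\<bar> \<le> \<epsilon>"
  shows "\<bar>Max (f ` N) - Max (g ` N)\<bar> \<le> \<epsilon>"
proof -
  have "Max (f ` N) \<le> Max (g ` N) + \<epsilon>" if "\<forall>c\<in>N. \<bar>f c - g c\<bar> \<le> \<epsilon>" for f g :: "'a \<Rightarrow> real"
  proof -
    have "Max (f ` N) \<in> f ` N"
      using assms(1,2) by simp
    then obtain c where "c \<in> N" "Max (f ` N) = f c"
      by (metis imageE)
    moreover have "g c \<le> Max (g ` N)"
      using assms(1) \<open>c \<in> N\<close> by simp
    ultimately show ?thesis
      using that by fastforce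
  qed
  from this[of f g] this[of g f] show ?thesis
    using assms(3) by (simp add: abs_minus_commute abs_le_iff)
qed

lemma agg_coord_diff_abs_le:
  assumes "finite N" "\<epsilon> \<ge> 0" "\<forall>c\<in>N. \<bar>f c - g c\<bar> \<le> \<epsilon>"
  shows "\<bar>agg_coord a N f - agg_coord a N g\<bar> \<le> real (card N) * \<epsilon>"
proof (cases "N = {}")
  case True
  then show ?thesis by (cases a) simp_all
next
  case False
  then have card: "real (card N) \<ge> 1"
    using assms(1) by (simp add: Suc_le_eq card_gt_0_iff)
  then have eps: "\<epsilon> \<le> real (card N) * \<epsilon>"
    using mult_right_mono[OF card assms(2)] by simp
  have sum: "\<bar>sum f N - sum g N\<bar> \<le> real (card N) * \<epsilon>"
    using assms(3) by (rule sum_diff_abs_le)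
  show ?thesis
  proof (cases a)
    case AggSum
    then show ?thesis using sum by simp
  next
    case AggMean
    have "\<bar>sum f N / real (card N) - sum g N / real (card N)\<bar> = \<bar>sum f N - sum g N\<bar> / real (card N)"
      by (simp add: abs_divide flip: diff_divide_distrib)
    also have "\<dots> \<le> real (card N) * \<epsilon> / real (card N)"
      using sum card by (intro divide_right_mono) auto
    also have "\<dots> = \<epsilon>"
      using card by simp
    finally show ?thesis
      using AggMean False eps by simp
  next
    case AggMax
    then show ?thesis
      using Max_image_diff_abs_le[OF assms(1) False assms(3)] False eps by simp
  qed
qed

lemma nat_div_diff_approx:
  assumes "d > 0"
  shows "\<bar>(real (a div d) - real (b div d)) - (real a - real b) / real d\<bar> \<le> 1"
proof -
  have bounds: "real (n div d) \<le> real n / real d" "real n / real d < real (n div d) + 1" for n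
  proof -
    have "real n / real d = real (n div d) + real (n mod d) / real d"
      by (rule of_nat_of_nat_div_aux)
    moreover have "real (n mod d) / real d < 1"
      using assms by simp
    ultimately show "real (n div d) \<le> real n / real d" "real n / real d < real (n div d) + 1"
      by simp_all
  qed
  have "(real a - real b) / real d = real a / real d - real b / real d"
    by (rule diff_divide_distrib)
  then show ?thesis
    using bounds[of a] bounds[of b] by linarith
qed

context fixed_point
begin

definition fswap :: "fxp \<Rightarrow> fxp" where
  "fswap T = (case T of (P, N, e) \<Rightarrow> (swap_term P, swap_term N, e))"

lemma fval_fswap [simp]: "fval V E b \<alpha> (fswap T) = fval V E b (\<alpha> \<circ> other) T"
  by (simp add: fswap_def fval_def evalt_cntb_sat_swap split: prod.splits)

lemma closed_fswap: "closed_fxp p S T \<Longrightarrow> closed_fxp p UNIV (fswap T)"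
  by (auto simp: fswap_def closed_fxp_def intro: closed_term_swap split: prod.splits)

text \<open>For the maximum, \<open>max\<^sub>c (P\<^sub>c - N\<^sub>c) = max\<^sub>c (P\<^sub>c + (S - N\<^sub>c)) - S\<close> with
  \<open>S = \<Sum>\<^sub>c N\<^sub>c\<close> keeps all intermediate values natural.\<close>

fun fagg :: "aggr \<Rightarrow> fxp \<Rightarrow> fxp" where
  "fagg AggSum (P, N, e) = (nbr_sum P, nbr_sum N, e)"
| "fagg AggMean (P, N, e) = (div_term (nbr_sum P) degree_term, div_term (nbr_sum N) degree_term, e)"
| "fagg AggMax (P, N, e) = (nbr_max (NPlus P (minus_term (nbr_sum N) N)), nbr_sum N, e)"

lemma closed_fagg: "closed_fxp p S T \<Longrightarrow> closed_fxp p {X1} (fagg a T)"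
  using closed_fxp_mono[of p S T UNIV] by (cases T; cases a) (auto simp: closed_fxp_def)

lemma fval_fagg_sum:
  assumes "finite V"
  shows "fval V E b \<alpha> (fagg AggSum T) = (\<Sum>c\<in>neighbours V E \<alpha>. fval V E b (\<alpha>(X2 := c)) T)"
  using assms by (cases T) (simp add: fval_def evalt_nbr_sum sum_divide_distrib flip: sum_subtractf)

lemma fval_fagg_max:
  assumes "finite V" "card V > 0" "closed_fxp p S T"
  shows "fval V E b \<alpha> (fagg AggMax T) = agg_coord AggMax (neighbours V E \<alpha>) (\<lambda>c. fval V E b (\<alpha>(X2 := c)) T)"
proof -
  obtain P N e where T: "T = (P, N, e)" by (cases T) auto
  have closed: "fnt P = {}" "fnt N = {}"
    using assms(3) by (auto simp: T closed_fxp_def closed_term_def)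
  let ?N = "neighbours V E \<alpha>"
  let ?p = "\<lambda>c. eval0 V E b (\<alpha>(X2 := c)) P" and ?n = "\<lambda>c. eval0 V E b (\<alpha>(X2 := c)) N"
  define S where "S = (\<Sum>c\<in>?N. ?n c)"
  have fin: "finite ?N"
    using finite_neighbours[OF assms(1)] .
  have sum_N: "eval0 V E b (\<alpha>(X2 := c)) (nbr_sum N) = S" "eval0 V E b \<alpha> (nbr_sum N) = S" for c
    using evalt_nbr_sum[OF assms(1)] by (simp_all add: S_def)
  have max: "eval0 V E b \<alpha> (nbr_max (NPlus P (minus_term (nbr_sum N) N)))
      = (if ?N = {} then 0 else Max ((\<lambda>c. ?p c + (S - ?n c)) ` ?N))"
    using evalt_nbr_max[OF assms(1)] closed sum_N by (simp add: evalt_minus_term)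
  show ?thesis
  proof (cases "?N = {}")
    case True
    then show ?thesis
      using max sum_N(2) by (simp add: T fval_def S_def)
  next
    case False
    define f where "f = (\<lambda>n::nat. (real n - real S) / (2 ^ e * resolution V))"
    have "mono f"
      unfolding f_def using resolution_pos[OF assms(2)] by (intro monoI divide_right_mono) auto
    have "f (?p c + (S - ?n c)) = fval V E b (\<alpha>(X2 := c)) T" if "c \<in> ?N" for c
    proof -
      have "?n c \<le> S"
        unfolding S_def using fin that by (intro member_le_sum) auto
      then show ?thesis by (simp add: f_def T fval_def of_nat_diff)
    qed
    then have "f ` (\<lambda>c. ?p c + (S - ?n c)) ` ?N = (\<lambda>c. fval V E b (\<alpha>(X2 := c)) T) ` ?N"
      by (simp add: image_image cong: image_cong)
    moreover have "fval V E b \<alpha> (fagg AggMax T) = f (Max ((\<lambda>c. ?p c + (S - ?n c)) ` ?N))"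
      using max sum_N(2) False by (simp add: T fval_def f_def)
    ultimately show ?thesis
      using mono_Max_commute[OF \<open>mono f\<close>] fin False by simp
  qed
qed

lemma fval_fagg_mean:
  assumes "finite V" "card V > 0" "closed_fxp p S T"
  shows "\<bar>fval V E b \<alpha> (fagg AggMean T)
     - agg_coord AggMean (neighbours V E \<alpha>) (\<lambda>c. fval V E b (\<alpha>(X2 := c)) T)\<bar> \<le> 1 / resolution V"
proof -
  obtain P N e where T: "T = (P, N, e)" by (cases T) auto
  have closed: "fnt P = {}" "fnt N = {}"
    using assms(3) by (auto simp: T closed_fxp_def closed_term_def)
  let ?N = "neighbours V E \<alpha>" and ?D = "2 ^ e * resolution V"
  define sP sN where "sP = (\<Sum>c\<in>?N. eval0 V E b (\<alpha>(X2 := c)) P)"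
    and "sN = (\<Sum>c\<in>?N. eval0 V E b (\<alpha>(X2 := c)) N)"
  define d where "d = card ?N"
  have D: "?D \<ge> resolution V" "resolution V > 0"
    using resolution_pos[OF assms(2)] by (simp_all add: mult_le_cancel_right1)
  have exact: "(\<Sum>c\<in>?N. fval V E b (\<alpha>(X2 := c)) T) = (real sP - real sN) / ?D"
    by (simp add: T fval_def sP_def sN_def sum_divide_distrib flip: sum_subtractf)
  show ?thesis
  proof (cases "?N = {}")
    case True
    then show ?thesis
      using closed D assms(1) by (simp add: T fval_def evalt_div_term evalt_nbr_sum)
  next
    case False
    then have "d > 0"
      using finite_neighbours[OF assms(1)] by (simp add: d_def card_gt_0_iff)
    then have mean: "fval V E b \<alpha> (fagg AggMean T) = (real (sP div d) - real (sN div d)) / ?D"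
      using closed assms(1)
      by (simp add: T fval_def evalt_div_term evalt_nbr_sum evalt_degree_term sP_def sN_def d_def)
    have "fval V E b \<alpha> (fagg AggMean T) - (\<Sum>c\<in>?N. fval V E b (\<alpha>(X2 := c)) T) / real d
        = ((real (sP div d) - real (sN div d)) - (real sP - real sN) / real d) / ?D"
      unfolding mean exact using D \<open>d > 0\<close> by (simp add: field_simps)
    then have "\<bar>fval V E b \<alpha> (fagg AggMean T) - (\<Sum>c\<in>?N. fval V E b (\<alpha>(X2 := c)) T) / real d\<bar>
        = \<bar>(real (sP div d) - real (sN div d)) - (real sP - real sN) / real d\<bar> / ?D"
      using D by (simp add: abs_divide)
    also have "\<dots> \<le> 1 / ?D"
      using nat_div_diff_approx[OF \<open>d > 0\<close>] D by (simp add: divide_right_mono)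
    also have "\<dots> \<le> 1 / resolution V"
      using D by (simp add: frac_le)
    finally show ?thesis
      using False by (simp add: d_def)
  qed
qed

lemma fval_fagg:
  assumes "finite V" "card V > 0" "closed_fxp p S T"
  shows "\<bar>fval V E b \<alpha> (fagg a T)
     - agg_coord a (neighbours V E \<alpha>) (\<lambda>c. fval V E b (\<alpha>(X2 := c)) T)\<bar> \<le> 1 / resolution V"
  using fval_fagg_sum[OF assms(1)] fval_fagg_max[OF assms] fval_fagg_mean[OF assms]
    resolution_pos[OF assms(2)] by (cases a) simp_all

end

section \<open>Simulating the GNN\<close>

definition layer_err :: "real \<Rightarrow> real \<Rightarrow> gnn_layer \<Rightarrow> real \<Rightarrow> real" where
  "layer_err n R L \<delta> = fnn_lip (lcomb L) * (n * fnn_lip (lmsg L) * \<delta> + 1 / R)"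

context fixed_point
begin

definition approx_signal :: "nat set \<Rightarrow> (nat \<Rightarrow> nat \<Rightarrow> bool) \<Rightarrow> (nat \<Rightarrow> nat \<Rightarrow> bool) \<Rightarrow> real
    \<Rightarrow> fxp list \<Rightarrow> (nat \<Rightarrow> real list) \<Rightarrow> bool" where
  "approx_signal V E b \<delta> Ts X \<longleftrightarrow> (\<forall>\<alpha>. \<alpha> X1 \<in> V \<longrightarrow> close_lists \<delta> (map (fval V E b \<alpha>) Ts) (X (\<alpha> X1)))"

text \<open>Evaluated with \<open>x\<^sub>2\<close> a neighbour \<open>w\<close> of \<open>x\<^sub>1\<close>, \<open>map fswap Ts\<close> gives the features of
  \<open>w\<close>; the aggregation then binds \<open>x\<^sub>2\<close> to the neighbours.\<close>

definition fmsgs :: "gnn_layer \<Rightarrow> fxp list \<Rightarrow> fxp list" where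
  "fmsgs L Ts = fnn_feval (lmsg L) (Ts @ map fswap Ts)"

definition flayer :: "gnn_layer \<Rightarrow> fxp list \<Rightarrow> fxp list" where
  "flayer L Ts = fnn_feval (lcomb L) (Ts @ map (fagg (lagg L)) (fmsgs L Ts))"

lemma length_fmsgs: "length (fmsgs L Ts) = length (fouts (lmsg L))"
  by (simp add: fmsgs_def)

lemma length_flayer: "layer_wf d q L \<Longrightarrow> length (flayer L Ts) = q"
  by (simp add: flayer_def layer_wf_def)

lemma closed_fmsgs:
  assumes "layer_wf d q L" "length Ts = d" "\<forall>T\<in>set Ts. closed_fxp p {X1} T"
  shows "\<forall>T\<in>set (fmsgs L Ts). closed_fxp p UNIV T"
proof -
  have "\<forall>T\<in>set (Ts @ map fswap Ts). closed_fxp p UNIV T"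
    using assms(3) closed_fxp_mono[of p "{X1}" _ UNIV] closed_fswap by auto
  then show ?thesis
    using assms(1,2) unfolding fmsgs_def by (intro closed_fnn_feval) (auto simp: layer_wf_def)
qed

lemma closed_flayer:
  assumes "layer_wf d q L" "length Ts = d" "\<forall>T\<in>set Ts. closed_fxp p {X1} T"
  shows "\<forall>T\<in>set (flayer L Ts). closed_fxp p {X1} T"
  using assms closed_fagg closed_fmsgs[OF assms] unfolding flayer_def
  by (intro closed_fnn_feval) (auto simp: layer_wf_def length_fmsgs)

lemma fmsgs_approx:
  assumes wf: "layer_wf d q L" and rpwl: "fnn_rpwl (lmsg L)"
    and len: "length Ts = d" and closed: "\<forall>T\<in>set Ts. closed_fxp p {X1} T"
    and V: "card V > 0" and "\<delta> \<ge> 0" and approx: "approx_signal V E b \<delta> Ts X"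
    and "\<alpha> X1 \<in> V" "c \<in> neighbours V E \<alpha>"
  shows "close_lists (fnn_lip (lmsg L) * \<delta>) (map (fval V E b (\<alpha>(X2 := c))) (fmsgs L Ts))
    (fnn_eval (lmsg L) (X (\<alpha> X1) @ X c))"
proof -
  let ?\<alpha>c = "\<alpha>(X2 := c)"
  have "close_lists \<delta> (map (fval V E b ?\<alpha>c) Ts) (X (\<alpha> X1))"
    "close_lists \<delta> (map (fval V E b (?\<alpha>c \<circ> other)) Ts) (X c)"
    using approx[unfolded approx_signal_def, rule_format, of ?\<alpha>c]
      approx[unfolded approx_signal_def, rule_format, of "?\<alpha>c \<circ> other"] assms(8,9)
    by (simp_all add: neighbours_def)
  then have "close_lists \<delta> (map (fval V E b ?\<alpha>c) (Ts @ map fswap Ts)) (X (\<alpha> X1) @ X c)"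
    by (simp add: close_lists_append comp_def)
  moreover have "\<forall>T\<in>set (Ts @ map fswap Ts). closed_fxp p UNIV T"
    using closed closed_fxp_mono[of p "{X1}" _ UNIV] closed_fswap by auto
  ultimately show ?thesis
    using fnn_eval_lipschitz[OF _ rpwl \<open>\<delta> \<ge> 0\<close>] fval_fnn_feval[OF _ rpwl _ _ V] wf len
    by (simp add: layer_wf_def fmsgs_def)
qed

lemma fagg_fmsgs_approx:
  assumes wf: "layer_wf d q L" and rpwl: "fnn_rpwl (lmsg L)"
    and len: "length Ts = d" and closed: "\<forall>T\<in>set Ts. closed_fxp p {X1} T"
    and V: "finite V" "card V > 0" and "\<delta> \<ge> 0" and approx: "approx_signal V E b \<delta> Ts X"
    and v: "\<alpha> X1 \<in> V"
  shows "close_lists (real (card V) * fnn_lip (lmsg L) * \<delta> + 1 / resolution V)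
    (map (fval V E b \<alpha>) (map (fagg (lagg L)) (fmsgs L Ts)))
    (aggregate (lagg L) (length (fouts (lmsg L))) {w \<in> V. E (\<alpha> X1) w}
      (\<lambda>w. fnn_eval (lmsg L) (X (\<alpha> X1) @ X w)))"
  unfolding close_lists_def
proof (intro conjI allI impI)
  fix j assume j: "j < length (map (fval V E b \<alpha>) (map (fagg (lagg L)) (fmsgs L Ts)))"
  let ?N = "neighbours V E \<alpha>" and ?lip = "fnn_lip (lmsg L)"
  let ?Y = "\<lambda>c. fval V E b (\<alpha>(X2 := c)) (fmsgs L Ts ! j)"
    and ?Z = "\<lambda>c. fnn_eval (lmsg L) (X (\<alpha> X1) @ X c) ! j"
  have closed_j: "closed_fxp p UNIV (fmsgs L Ts ! j)"
    using closed_fmsgs[OF wf len closed] j by (simp add: length_fmsgs)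
  have "\<bar>agg_coord (lagg L) ?N ?Y - agg_coord (lagg L) ?N ?Z\<bar> \<le> real (card ?N) * (?lip * \<delta>)"
    using fmsgs_approx[where \<alpha> = \<alpha>, OF wf rpwl len closed V(2) \<open>\<delta> \<ge> 0\<close> approx v] j \<open>\<delta> \<ge> 0\<close> fnn_lip_ge_1[OF rpwl]
      finite_neighbours[OF V(1)]
    by (intro agg_coord_diff_abs_le) (auto simp: close_lists_def length_fmsgs)
  also have "\<dots> \<le> real (card V) * ?lip * \<delta>"
    using card_mono[OF V(1), of ?N] \<open>\<delta> \<ge> 0\<close> fnn_lip_ge_1[OF rpwl]
    by (simp add: neighbours_def mult.assoc mult_right_mono)
  finally show "\<bar>map (fval V E b \<alpha>) (map (fagg (lagg L)) (fmsgs L Ts)) ! j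
      - aggregate (lagg L) (length (fouts (lmsg L))) {w \<in> V. E (\<alpha> X1) w}
          (\<lambda>w. fnn_eval (lmsg L) (X (\<alpha> X1) @ X w)) ! j\<bar>
      \<le> real (card V) * ?lip * \<delta> + 1 / resolution V"
    using fval_fagg[OF V closed_j, where E = E and b = b and \<alpha> = \<alpha> and a = "lagg L"] j
    by (simp add: aggregate_nth neighbours_def length_fmsgs)
qed (simp add: length_fmsgs)

lemma flayer_approx:
  assumes graph: "graph V E" and wf: "layer_wf d q L"
    and rpwl: "fnn_rpwl (lmsg L)" "fnn_rpwl (lcomb L)"
    and len: "length Ts = d" and closed: "\<forall>T\<in>set Ts. closed_fxp p {X1} T"
    and "\<delta> \<ge> 0" and approx: "approx_signal V E b \<delta> Ts X"
  shows "approx_signal V E b (layer_err (card V) (resolution V) L \<delta>) (flayer L Ts) (apply_layer V E L X)"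
  unfolding approx_signal_def
proof (intro allI impI)
  fix \<alpha> assume v: "\<alpha> X1 \<in> V"
  define \<eta> where "\<eta> = real (card V) * fnn_lip (lmsg L) * \<delta> + 1 / resolution V"
  have V: "finite V" "card V > 0"
    using graph by (auto simp: graph_def card_gt_0_iff)
  have "1 \<le> real (card V) * fnn_lip (lmsg L)"
    using V(2) fnn_lip_ge_1[OF rpwl(1)] by (intro mult_ge1_I) auto
  then have "\<delta> \<le> real (card V) * fnn_lip (lmsg L) * \<delta>"
    using mult_right_mono[OF _ \<open>\<delta> \<ge> 0\<close>] by fastforce
  moreover have "0 < 1 / resolution V"
    using resolution_pos[OF V(2)] by simp
  ultimately have "\<delta> \<le> \<eta>"
    unfolding \<eta>_def by linarith
  then have "close_lists \<eta> (map (fval V E b \<alpha>) Ts) (X (\<alpha> X1))"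
    using approx v close_lists_mono by (auto simp: approx_signal_def)
  then have "close_lists \<eta> (map (fval V E b \<alpha>) (Ts @ map (fagg (lagg L)) (fmsgs L Ts)))
      (X (\<alpha> X1) @ aggregate (lagg L) (length (fouts (lmsg L))) {w \<in> V. E (\<alpha> X1) w}
        (\<lambda>w. fnn_eval (lmsg L) (X (\<alpha> X1) @ X w)))"
    using fagg_fmsgs_approx[where \<alpha> = \<alpha>, OF wf rpwl(1) len closed V \<open>\<delta> \<ge> 0\<close> approx v]
    by (simp add: close_lists_append \<eta>_def)
  moreover have "\<forall>T\<in>set (Ts @ map (fagg (lagg L)) (fmsgs L Ts)). closed_fxp p {X1} T"
    using closed closed_fmsgs[OF wf len closed] closed_fagg by auto
  ultimately show "close_lists (layer_err (card V) (resolution V) L \<delta>)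
      (map (fval V E b \<alpha>) (flayer L Ts)) (apply_layer V E L X (\<alpha> X1))"
    using fnn_eval_lipschitz[OF _ rpwl(2)] fval_fnn_feval[OF _ rpwl(2) _ _ V(2)] wf len
      \<open>\<delta> \<le> \<eta>\<close> \<open>\<delta> \<ge> 0\<close>
    by (simp add: layer_wf_def flayer_def apply_layer_def layer_err_def \<eta>_def length_fmsgs)
qed

fun fgnn :: "gnn \<Rightarrow> fxp list \<Rightarrow> fxp list" where
  "fgnn [] Ts = Ts"
| "fgnn (L # Ls) Ts = fgnn Ls (flayer L Ts)"

lemma length_closed_fgnn:
  "gnn_wf d q N \<Longrightarrow> length Ts = d \<Longrightarrow> \<forall>T\<in>set Ts. closed_fxp p {X1} T \<Longrightarrow>
    length (fgnn N Ts) = q \<and> (\<forall>T\<in>set (fgnn N Ts). closed_fxp p {X1} T)"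
proof (induction N arbitrary: d Ts)
  case (Cons L Ls)
  then obtain r where wf: "layer_wf d r L" "gnn_wf r q Ls"
    by auto
  show ?case
    using Cons.IH[OF wf(2) length_flayer[OF wf(1)] closed_flayer[OF wf(1) Cons.prems(2,3)]] by simp
qed simp

end

fun gnn_err :: "real \<Rightarrow> real \<Rightarrow> gnn \<Rightarrow> real \<Rightarrow> real" where
  "gnn_err n R [] \<delta> = \<delta>"
| "gnn_err n R (L # Ls) \<delta> = gnn_err n R Ls (layer_err n R L \<delta>)"

lemma gnn_rpwl_Cons [simp]:
  "gnn_rpwl (L # Ls) \<longleftrightarrow> fnn_rpwl (lmsg L) \<and> fnn_rpwl (lcomb L) \<and> gnn_rpwl Ls"
  by (auto simp: gnn_rpwl_def)

lemma layer_err_nonneg: "fnn_rpwl (lmsg L) \<Longrightarrow> fnn_rpwl (lcomb L) \<Longrightarrow> n \<ge> 0 \<Longrightarrow> R > 0 \<Longrightarrow>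
    \<delta> \<ge> 0 \<Longrightarrow> layer_err n R L \<delta> \<ge> 0"
  using fnn_lip_ge_1[of "lmsg L"] fnn_lip_ge_1[of "lcomb L"]
  by (auto simp: layer_err_def intro!: mult_nonneg_nonneg add_nonneg_nonneg)

fun gnn_lip :: "gnn \<Rightarrow> real" where
  "gnn_lip [] = 1"
| "gnn_lip (L # Ls) = gnn_lip Ls * fnn_lip (lcomb L) * fnn_lip (lmsg L)"

lemma gnn_lip_ge_1: "gnn_rpwl N \<Longrightarrow> gnn_lip N \<ge> 1"
  by (induction N) (simp_all add: fnn_lip_ge_1 mult_ge1_I)

lemma gnn_err_bound:
  assumes "gnn_rpwl N" "n \<ge> 1" "R > 0" "\<delta> \<ge> 0"
  shows "gnn_err n R N \<delta> \<le> gnn_lip N * n ^ length N * (\<delta> + real (length N) / R)"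
  using assms
proof (induction N arbitrary: \<delta>)
  case (Cons L Ls)
  let ?a = "fnn_lip (lcomb L)" and ?b = "fnn_lip (lmsg L)" and ?m = "real (length Ls)"
  define c where "c = ?a * ?b * n"
  have a: "?a \<ge> 1" and b: "?b \<ge> 1"
    using Cons.prems fnn_lip_ge_1 by auto
  have K: "gnn_lip Ls * n ^ length Ls \<ge> 1"
    using Cons.prems by (simp add: gnn_lip_ge_1 mult_ge1_I one_le_power)
  have bn: "?b * n \<ge> 1"
    using b Cons.prems(2) by (rule mult_ge1_I)
  then have "?a * 1 \<le> ?a * (?b * n)"
    using a by (intro mult_left_mono) auto
  then have c: "?a \<le> c" "1 \<le> c"
    using mult_ge1_I[OF a bn] by (simp_all add: c_def mult.assoc)
  have "layer_err n R L \<delta> + ?m / R = c * \<delta> + (?a + ?m) / R"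
    by (simp add: layer_err_def c_def algebra_simps add_divide_distrib)
  also have "\<dots> \<le> c * \<delta> + c * (?m + 1) / R"
    using c Cons.prems(3) mult_right_mono[OF c(2), of ?m]
    by (intro add_left_mono divide_right_mono) (auto simp: algebra_simps)
  finally have step: "layer_err n R L \<delta> + ?m / R \<le> c * (\<delta> + (?m + 1) / R)"
    by (simp add: algebra_simps)
  have "gnn_err n R (L # Ls) \<delta> \<le> gnn_lip Ls * n ^ length Ls * (layer_err n R L \<delta> + ?m / R)"
    using Cons layer_err_nonneg[of L n R \<delta>] by simp
  also have "\<dots> \<le> gnn_lip Ls * n ^ length Ls * (c * (\<delta> + (?m + 1) / R))"
    using step K by (simp add: mult_left_mono)
  also have "\<dots> = gnn_lip (L # Ls) * n ^ length (L # Ls) * (\<delta> + real (length (L # Ls)) / R)"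
    by (simp add: c_def algebra_simps)
  finally show ?case .
qed simp

context fixed_point
begin

lemma fgnn_approx:
  assumes "graph V E"
  shows "gnn_wf d q N \<Longrightarrow> gnn_rpwl N \<Longrightarrow> length Ts = d \<Longrightarrow> \<forall>T\<in>set Ts. closed_fxp p {X1} T \<Longrightarrow>
    \<delta> \<ge> 0 \<Longrightarrow> approx_signal V E b \<delta> Ts X \<Longrightarrow>
    approx_signal V E b (gnn_err (card V) (resolution V) N \<delta>) (fgnn N Ts) (apply_gnn V E N X)"
proof (induction N arbitrary: d Ts X \<delta>)
  case (Cons L Ls)
  then obtain r where wf: "layer_wf d r L" "gnn_wf r q Ls"
    by auto
  have "card V > 0"
    using assms by (auto simp: graph_def card_gt_0_iff)
  then have "layer_err (card V) (resolution V) L \<delta> \<ge> 0"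
    using Cons.prems resolution_pos by (intro layer_err_nonneg) auto
  then show ?case
    using Cons.IH[OF wf(2)] Cons.prems flayer_approx[OF assms wf(1)]
      length_flayer[OF wf(1)] closed_flayer[OF wf(1)] by simp
qed simp

definition label_fxps :: "nat \<Rightarrow> fxp list" where
  "label_fxps p = map (\<lambda>i. (NTimes (Cnt BNil (FPred i X1)) resolution_term, NZero, 0)) [0..<p]"

lemma length_label_fxps [simp]: "length (label_fxps p) = p"
  by (simp add: label_fxps_def)

lemma label_fxps_approx: "card V > 0 \<Longrightarrow> approx_signal V E b 0 (label_fxps p) (label_signal p b)"
  using resolution_pos[of V] by (simp add: approx_signal_def close_lists_def label_fxps_def
      label_signal_def fval_def)

lemma closed_label_fxps: "\<forall>T\<in>set (label_fxps p). closed_fxp p {X1} T"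
  unfolding label_fxps_def closed_fxp_def by (auto simp: closed_term_def[of _ _ "Cnt _ _"])

lemma dyadic_half: "dyadic (1 / 2)"
  unfolding dyadic_def by (rule exI[of _ 1], rule exI[of _ 1]) simp

lemma fgnn_label_error:
  assumes rpwl: "gnn_rpwl N" and wf: "gnn_wf p 1 N" and deg: "deg = length N"
    and G: "graph V E" and v: "\<alpha> X1 \<in> V"
  shows "\<bar>fval V E b \<alpha> (fgnn N (label_fxps p) ! 0) - apply_gnn V E N (label_signal p b) (\<alpha> X1) ! 0\<bar>
    \<le> gnn_lip N * real (length N) / 2 ^ prec"
proof -
  have V: "card V > 0" "real (card V) \<ge> 1"
    using G by (auto simp: graph_def card_gt_0_iff Suc_le_eq)
  have "approx_signal V E b (gnn_err (card V) (resolution V) N 0) (fgnn N (label_fxps p))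
      (apply_gnn V E N (label_signal p b))"
    using fgnn_approx[OF G wf rpwl _ closed_label_fxps[of p] order_refl
        label_fxps_approx[OF V(1), where p = p]] by simp
  then have "close_lists (gnn_err (card V) (resolution V) N 0)
      (map (fval V E b \<alpha>) (fgnn N (label_fxps p))) (apply_gnn V E N (label_signal p b) (\<alpha> X1))"
    using v by (simp add: approx_signal_def)
  moreover have "length (fgnn N (label_fxps p)) = 1"
    using length_closed_fgnn[OF wf _ closed_label_fxps[of p]] by simp
  ultimately have "\<bar>fval V E b \<alpha> (fgnn N (label_fxps p) ! 0) - apply_gnn V E N (label_signal p b) (\<alpha> X1) ! 0\<bar>
      \<le> gnn_err (card V) (resolution V) N 0"
    by (simp add: close_lists_def)
  also have "\<dots> \<le> gnn_lip N * real (card V) ^ length N * (real (length N) / resolution V)"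
    using gnn_err_bound[OF rpwl V(2) resolution_pos[OF V(1)] order_refl] by simp
  also have "\<dots> = gnn_lip N * real (length N) / 2 ^ prec"
    using V(1) by (simp add: resolution_def flip: deg)
  finally show ?thesis .
qed

lemma gfoc_definable_if_precise:
  assumes rpwl: "gnn_rpwl N" and computes: "gnn_computes p N Q" and deg: "deg = length N"
    and precise: "gnn_lip N * real (length N) / 2 ^ prec < 1 / 4"
  shows "gfoc_definable p Q"
proof -
  let ?T = "fgnn N (label_fxps p) ! 0"
  have wf: "gnn_wf p 1 N"
    using computes by (simp add: gnn_computes_def)
  then have "closed_fxp p {X1} ?T"
    using length_closed_fgnn[OF wf _ closed_label_fxps[of p]] by simp
  then have closed_form: "closed_form p {X1} (fle (fconst (1 / 2)) ?T)"
    by simp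
  have "sat V E b \<alpha> \<beta> (fle (fconst (1 / 2)) ?T) \<longleftrightarrow> Q V E b v"
    if G: "graph V E" and v: "v \<in> V" "\<alpha> X1 = v" for V E b v \<alpha> \<beta>
  proof -
    have "card V > 0"
      using G by (auto simp: graph_def card_gt_0_iff)
    have "sat V E b \<alpha> \<beta> (fle (fconst (1 / 2)) ?T) \<longleftrightarrow> sat0 V E b \<alpha> (fle (fconst (1 / 2)) ?T)"
      using closed_form_fnf[OF closed_form] by (rule sat_closed)
    also have "\<dots> \<longleftrightarrow> 1 / 2 \<le> fval V E b \<alpha> ?T"
      using sat_fle[OF \<open>card V > 0\<close>] dyadic_half \<open>card V > 0\<close> by simp
    moreover have "\<bar>fval V E b \<alpha> ?T - apply_gnn V E N (label_signal p b) v ! 0\<bar> < 1 / 4"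
      using order_le_less_trans[OF fgnn_label_error[OF rpwl wf deg G, where \<alpha> = \<alpha> and b = b] precise] v
      by simp
    moreover have "(Q V E b v \<longrightarrow> apply_gnn V E N (label_signal p b) v ! 0 \<ge> 3 / 4)
        \<and> (\<not> Q V E b v \<longrightarrow> apply_gnn V E N (label_signal p b) v ! 0 \<le> 1 / 4)"
      using computes G v by (simp add: gnn_computes_def)
    ultimately show ?thesis
      by (cases "Q V E b v") (auto simp: abs_less_iff)
  qed
  then show ?thesis
    using closed_form unfolding gfoc_definable_def closed_form_def by blast
qed

end

theorem theorem1p4:
  fixes p :: nat and Q :: query
  assumes "unary_query p Q"
    and "rpwl_gnn_computable p Q"
  shows "gfoc_definable p Q"
proof -
  obtain N where rpwl: "gnn_rpwl N" and computes: "gnn_computes p N Q"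
    using assms(2) by (auto simp: rpwl_gnn_computable_def)
  obtain prec :: nat where "4 * (gnn_lip N * real (length N)) < 2 ^ prec"
    using real_arch_pow[of 2] by force
  then have "gnn_lip N * real (length N) / 2 ^ prec < 1 / 4"
    by (simp add: field_simps)
  then show ?thesis
    using fixed_point.gfoc_definable_if_precise[OF rpwl computes refl] by blast
qed

end
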